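(* Let $U$ be a Galois algebra over $\Gamma$ in $\mathcal{K}=(L*\mathfrak{M})^G$ with $\mathfrak{M}\cong\mathbb{Z}^n$. Then $GK\,U\geq GK\,\Gamma+n$.
   Context: $\mathsf{k}$ is an algebraically closed field of characteristic zero. Galois algebra setup: $\Gamma\subset U$ where $\Gamma$ is a finitely generated commutative $\mathsf{k}$-domain and $U$ is an associative algebra finitely generated over $\Gamma$; $K$ is the field of fractions of $\Gamma$; $L$ is a finite Galois extension of $K$ with Galois group $G$; $\mathfrak{M}\subset\operatorname{Aut}_{\mathsf{k}}L$ is a monoid with the separating property (if $m,m'\in\mathfrak{M}$ have the same restriction to $K$ then $m=m'$), and $G$ acts on $\mathfrak{M}$ by conjugation, hence on the skew monoid ring $L*\mathfrak{M}$. $U$ is a Galois algebra over $\Gamma$ if there is an embedding $U\hookrightarrow\mathcal{K}:=(L*\mathfrak{M})^G$ with $KU=UK=\mathcal{K}$. $GK$ is Gelfand–Kirillov dimension: $GK\,A=\sup_V\limsup_m\log(\dim V^m)/\log m$ over finite-dimensional subspaces $V\ni1$. *)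

theory Defs
  imports Complex_Main "HOL-Computational_Algebra.Polynomial"
    "HOL-Library.Extended_Real" "HOL-Library.Liminf_Limsup"
begin

text \<open>Everything lives inside the field L, represented by a type 'L.
  The base field k, the domain Gamma and its fraction field K are subsets of 'L.\<close>

definition is_subfield :: "'a::field set \<Rightarrow> bool" where
  "is_subfield F \<longleftrightarrow> 0 \<in> F \<and> 1 \<in> F \<and> (\<forall>x\<in>F. \<forall>y\<in>F. x + y \<in> F \<and> x - y \<in> F \<and> x * y \<in> F)
     \<and> (\<forall>x\<in>F. x \<noteq> 0 \<longrightarrow> inverse x \<in> F)"

definition alg_closed_subfield :: "'a::field set \<Rightarrow> bool" where
  "alg_closed_subfield F \<longleftrightarrow> is_subfield F \<and>
     (\<forall>p::'a poly. (\<forall>i. coeff p i \<in> F) \<and> degree p > 0 \<longrightarrow> (\<exists>x\<in>F. poly p x = 0))"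

definition is_subring :: "'a::field set \<Rightarrow> bool" where
  "is_subring R \<longleftrightarrow> 0 \<in> R \<and> 1 \<in> R \<and> (\<forall>x\<in>R. \<forall>y\<in>R. x + y \<in> R \<and> x - y \<in> R \<and> x * y \<in> R)"

text \<open>Subring (= k-subalgebra once it contains k) generated by a set.\<close>
definition ring_gen :: "'a::field set \<Rightarrow> 'a set" where
  "ring_gen A = \<Inter>{R. is_subring R \<and> A \<subseteq> R}"

definition fg_k_domain :: "'a::field set \<Rightarrow> 'a set \<Rightarrow> bool" where
  "fg_k_domain k \<Gamma> \<longleftrightarrow> k \<subseteq> \<Gamma> \<and> (\<exists>S. finite S \<and> S \<subseteq> \<Gamma> \<and> \<Gamma> = ring_gen (k \<union> S))"

definition frac_field :: "'a::field set \<Rightarrow> 'a set" where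
  "frac_field \<Gamma> = {a / b | a b. a \<in> \<Gamma> \<and> b \<in> \<Gamma> \<and> b \<noteq> 0}"

definition fspan :: "'a::field set \<Rightarrow> 'a set \<Rightarrow> 'a set" where
  "fspan F S = {(\<Sum>s\<in>T. c s * s) | T c. finite T \<and> T \<subseteq> S \<and> c ` T \<subseteq> F}"

definition field_aut :: "('a::field \<Rightarrow> 'a) \<Rightarrow> bool" where
  "field_aut \<sigma> \<longleftrightarrow> bij \<sigma> \<and> (\<forall>x y. \<sigma> (x + y) = \<sigma> x + \<sigma> y) \<and> (\<forall>x y. \<sigma> (x * y) = \<sigma> x * \<sigma> y)"

definition Aut_over :: "'a::field set \<Rightarrow> ('a \<Rightarrow> 'a) set" where
  "Aut_over F = {\<sigma>. field_aut \<sigma> \<and> (\<forall>x\<in>F. \<sigma> x = x)}"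

definition finite_galois_over :: "'a::field set \<Rightarrow> bool" where
  "finite_galois_over K \<longleftrightarrow> is_subfield K \<and> (\<exists>B. finite B \<and> fspan K B = UNIV)
     \<and> {x. \<forall>\<sigma>\<in>Aut_over K. \<sigma> x = x} = K"

text \<open>The monoid M is isomorphic to Z^n (Z^n represented as integer sequences
  supported in {..<n}).\<close>
definition Zn :: "nat \<Rightarrow> (nat \<Rightarrow> int) set" where
  "Zn n = {z. \<forall>i\<ge>n. z i = 0}"

definition monoid_iso_Zn :: "('a \<Rightarrow> 'a) set \<Rightarrow> nat \<Rightarrow> bool" where
  "monoid_iso_Zn M n \<longleftrightarrow> (\<exists>\<phi>. bij_betw \<phi> (Zn n) M \<and>
      (\<forall>a\<in>Zn n. \<forall>b\<in>Zn n. \<phi> (\<lambda>i. a i + b i) = \<phi> a \<circ> \<phi> b))"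

text \<open>Skew monoid ring L*M: elements are finitely supported functions M \<rightarrow> L,
  x = sum_m x(m) m.\<close>
type_synonym 'a skew = "('a \<Rightarrow> 'a) \<Rightarrow> 'a"

definition ssupp :: "'a::field skew \<Rightarrow> ('a \<Rightarrow> 'a) set" where
  "ssupp x = {m. x m \<noteq> 0}"

definition skew_carrier :: "('a::field \<Rightarrow> 'a) set \<Rightarrow> 'a skew set" where
  "skew_carrier M = {x. finite (ssupp x) \<and> ssupp x \<subseteq> M}"

text \<open>(a m)(b m') = a m(b) (m m').\<close>
definition skew_mult :: "'a::field skew \<Rightarrow> 'a skew \<Rightarrow> 'a skew" where
  "skew_mult x y = (\<lambda>p. \<Sum>(m, m')\<in>{(m, m'). m \<in> ssupp x \<and> m' \<in> ssupp y \<and> m \<circ> m' = p}.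
                          x m * m (y m'))"

definition skew_add :: "'a::field skew \<Rightarrow> 'a skew \<Rightarrow> 'a skew" where
  "skew_add x y = (\<lambda>p. x p + y p)"

definition skew_neg :: "'a::field skew \<Rightarrow> 'a skew" where
  "skew_neg x = (\<lambda>p. - x p)"

definition skew_zero :: "'a::field skew" where
  "skew_zero = (\<lambda>p. 0)"

definition iota :: "'a::field \<Rightarrow> 'a skew" where
  "iota l = (\<lambda>p. if p = id then l else 0)"

definition skew_one :: "'a::field skew" where
  "skew_one = iota 1"

text \<open>Action of g in G on L*M: g(sum l_m m) = sum g(l_m) (g m g^-1).\<close>
definition skew_act :: "('a::field \<Rightarrow> 'a) \<Rightarrow> 'a skew \<Rightarrow> 'a skew" where
  "skew_act g x = (\<lambda>p. g (x (inv g \<circ> p \<circ> g)))"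

definition skew_invariants :: "('a::field \<Rightarrow> 'a) set \<Rightarrow> ('a \<Rightarrow> 'a) set \<Rightarrow> 'a skew set" where
  "skew_invariants M G = {x \<in> skew_carrier M. \<forall>g\<in>G. skew_act g x = x}"

definition skew_subring :: "'a::field skew set \<Rightarrow> bool" where
  "skew_subring R \<longleftrightarrow> skew_zero \<in> R \<and> skew_one \<in> R \<and>
     (\<forall>x\<in>R. \<forall>y\<in>R. skew_add x y \<in> R \<and> skew_mult x y \<in> R) \<and> (\<forall>x\<in>R. skew_neg x \<in> R)"

definition skew_ring_gen :: "'a::field skew set \<Rightarrow> 'a skew set" where
  "skew_ring_gen A = \<Inter>{R. skew_subring R \<and> A \<subseteq> R}"

definition skew_sum :: "('b \<Rightarrow> 'a::field skew) \<Rightarrow> 'b set \<Rightarrow> 'a skew" where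
  "skew_sum f T = (\<lambda>p. \<Sum>t\<in>T. f t p)"

definition left_span :: "'a::field set \<Rightarrow> 'a skew set \<Rightarrow> 'a skew set" where
  "left_span K U = {skew_sum (\<lambda>u. skew_mult (iota (c u)) u) T | T c. finite T \<and> T \<subseteq> U \<and> c ` T \<subseteq> K}"

definition right_span :: "'a::field set \<Rightarrow> 'a skew set \<Rightarrow> 'a skew set" where
  "right_span K U = {skew_sum (\<lambda>u. skew_mult u (iota (c u))) T | T c. finite T \<and> T \<subseteq> U \<and> c ` T \<subseteq> K}"

definition kspan :: "'a::field set \<Rightarrow> 'a skew set \<Rightarrow> 'a skew set" where
  "kspan k S = {skew_sum (\<lambda>s p. c s * s p) T | T c. finite T \<and> T \<subseteq> S \<and> c ` T \<subseteq> k}"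

definition kdim :: "'a::field set \<Rightarrow> 'a skew set \<Rightarrow> nat" where
  "kdim k V = (LEAST d. \<exists>S. finite S \<and> card S = d \<and> kspan k S = V)"

definition set_prod :: "'a::field skew set \<Rightarrow> 'a skew set \<Rightarrow> 'a skew set" where
  "set_prod A B = {skew_mult a b | a b. a \<in> A \<and> b \<in> B}"

text \<open>Products of m elements of V; V^m is the k-span of these.\<close>
primrec vprods :: "'a::field skew set \<Rightarrow> nat \<Rightarrow> 'a skew set" where
  "vprods V 0 = {skew_one}"
| "vprods V (Suc m) = set_prod (vprods V m) V"

definition GKdim :: "'a::field set \<Rightarrow> 'a skew set \<Rightarrow> ereal" where
  "GKdim k A = (SUP V \<in> {V. (\<exists>S. finite S \<and> S \<subseteq> A \<and> V = kspan k S) \<and> skew_one \<in> V}.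
      limsup (\<lambda>m. ereal (ln (real (kdim k (kspan k (vprods V m)))) / ln (real m))))"

end

theory Submission
  imports Defs "HOL-Analysis.Analysis" "HOL-Real_Asymp.Real_Asymp"
begin

(* Transport the lexicographic order of Z^n to M along the isomorphism; every nonzero element of
   L*M then has a leading exponent, and leading exponents add under multiplication because each
   element of M acts injectively on L.

   Orbit sums of elements of M under conjugation by G are G-invariant, hence lie in K U; clearing
   denominators puts a multiple into U, so for every exponent w some element of U has leading
   exponent g.w for some g in G, where g acts on Z^n by an injective additive map. Prescribing the
   moment-curve exponents (1, N, N^2, ...) for infinitely many N, one g occurs infinitely often, and
   Vandermonde gives u_1, ..., u_n in U whose leading exponents are linearly independent over Z.

   For a finite-dimensional subspace V0 of Gamma containing 1, let V = V0 + span(u_j). If B is a basis of V0^m (scalars in L) and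
   a ranges over {0..m}^n, the elements b u^a lie in V^((n+1)m), and are linearly independent since
   the monomials u^a have pairwise distinct leading exponents. Hence
   dim V^((n+1)m) >= (m+1)^n dim V0^m, and taking logarithms adds n to the growth exponent. *)

section \<open>Linear algebra over a subfield\<close>

lemma subfield_0: "is_subfield F \<Longrightarrow> 0 \<in> F" by (simp add: is_subfield_def)
lemma subfield_1: "is_subfield F \<Longrightarrow> 1 \<in> F" by (simp add: is_subfield_def)
lemma subfield_add: "is_subfield F \<Longrightarrow> x \<in> F \<Longrightarrow> y \<in> F \<Longrightarrow> x + y \<in> F" by (simp add: is_subfield_def)
lemma subfield_diff: "is_subfield F \<Longrightarrow> x \<in> F \<Longrightarrow> y \<in> F \<Longrightarrow> x - y \<in> F" by (simp add: is_subfield_def)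
lemma subfield_mult: "is_subfield F \<Longrightarrow> x \<in> F \<Longrightarrow> y \<in> F \<Longrightarrow> x * y \<in> F" by (simp add: is_subfield_def)
lemma subfield_inverse: "is_subfield F \<Longrightarrow> x \<in> F \<Longrightarrow> inverse x \<in> F"
  by (cases "x = 0") (auto simp: is_subfield_def)
lemma subfield_divide: "is_subfield F \<Longrightarrow> x \<in> F \<Longrightarrow> y \<in> F \<Longrightarrow> x / y \<in> F"
  by (simp add: divide_inverse subfield_mult subfield_inverse)
lemma subfield_uminus: "is_subfield F \<Longrightarrow> x \<in> F \<Longrightarrow> - x \<in> F"
  using subfield_diff[of F 0 x] subfield_0[of F] by simp
lemma subfield_sum: "is_subfield F \<Longrightarrow> (\<And>i. i \<in> I \<Longrightarrow> f i \<in> F) \<Longrightarrow> sum f I \<in> F"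
  by (induction I rule: infinite_finite_induct) (auto simp: subfield_0 subfield_add)

definition lspan :: "'a::field set \<Rightarrow> ('c \<Rightarrow> 'a) set \<Rightarrow> ('c \<Rightarrow> 'a) set" where
  "lspan F S = {(\<lambda>p. \<Sum>s\<in>T. c s * s p) | T c. finite T \<and> T \<subseteq> S \<and> c ` T \<subseteq> F}"

definition lin_indep :: "'a::field set \<Rightarrow> 'i set \<Rightarrow> ('i \<Rightarrow> 'c \<Rightarrow> 'a) \<Rightarrow> bool" where
  "lin_indep F I f \<longleftrightarrow> (\<forall>c. (\<forall>i\<in>I. c i \<in> F) \<and> (\<forall>p. (\<Sum>i\<in>I. c i * f i p) = 0) \<longrightarrow> (\<forall>i\<in>I. c i = 0))"

lemma lin_indepD:
  "lin_indep F I f \<Longrightarrow> \<forall>i\<in>I. c i \<in> F \<Longrightarrow> \<forall>p. (\<Sum>i\<in>I. c i * f i p) = 0 \<Longrightarrow> i \<in> I \<Longrightarrow> c i = 0"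
  unfolding lin_indep_def by blast

lemma kspan_eq_lspan: "kspan k S = lspan k S"
  unfolding kspan_def lspan_def skew_sum_def by simp

lemma lspan_sumI:
  "finite T \<Longrightarrow> T \<subseteq> S \<Longrightarrow> (\<And>s. s \<in> T \<Longrightarrow> c s \<in> F) \<Longrightarrow> (\<lambda>p. \<Sum>s\<in>T. c s * s p) \<in> lspan F S"
  unfolding lspan_def by blast

lemma lspan_finite_subset:
  assumes "x \<in> lspan F S"
  obtains T where "finite T" "T \<subseteq> S" "x \<in> lspan F T"
  using assms unfolding lspan_def by blast

lemma lspan_finite_iff:
  assumes "finite B" and "0 \<in> F"
  shows "x \<in> lspan F B \<longleftrightarrow> (\<exists>c. (\<forall>s\<in>B. c s \<in> F) \<and> x = (\<lambda>p. \<Sum>s\<in>B. c s * s p))"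
proof
  assume "x \<in> lspan F B"
  then obtain T c where T: "finite T" "T \<subseteq> B" "c ` T \<subseteq> F" and x: "x = (\<lambda>p. \<Sum>s\<in>T. c s * s p)"
    unfolding lspan_def by blast
  define c' where "c' s = (if s \<in> T then c s else 0)" for s
  have "(\<Sum>s\<in>B. c' s * s p) = (\<Sum>s\<in>T. c s * s p)" for p
    using assms T by (intro sum.mono_neutral_cong_right) (auto simp: c'_def)
  then show "\<exists>c. (\<forall>s\<in>B. c s \<in> F) \<and> x = (\<lambda>p. \<Sum>s\<in>B. c s * s p)"
    using T assms by (intro exI[of _ c']) (auto simp: c'_def x)
next
  assume "\<exists>c. (\<forall>s\<in>B. c s \<in> F) \<and> x = (\<lambda>p. \<Sum>s\<in>B. c s * s p)"
  then show "x \<in> lspan F B" using assms(1) by (auto intro: lspan_sumI)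
qed

lemma lspan_mono: "A \<subseteq> B \<Longrightarrow> lspan F A \<subseteq> lspan F B"
  unfolding lspan_def by blast

lemma lspan_empty: "lspan F {} = {\<lambda>p. 0}"
  unfolding lspan_def by auto

lemma lspan_zero: "(\<lambda>p. 0) \<in> lspan F S"
  using lspan_mono[of "{}" S F] lspan_empty by auto

lemma lspan_superset: "is_subfield F \<Longrightarrow> S \<subseteq> lspan F S"
proof
  fix s assume "is_subfield F" "s \<in> S"
  then have "(\<lambda>p. \<Sum>t\<in>{s}. 1 * t p) \<in> lspan F S"
    by (intro lspan_sumI) (auto simp: subfield_1)
  then show "s \<in> lspan F S" by simp
qed

lemma lspan_add_scaled:
  assumes F: "is_subfield F" and x: "x \<in> lspan F S" and y: "y \<in> lspan F S" and c: "c \<in> F"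
  shows "(\<lambda>p. c * x p + y p) \<in> lspan F S"
proof -
  obtain Tx where Tx: "finite Tx" "Tx \<subseteq> S" "x \<in> lspan F Tx" using x by (rule lspan_finite_subset)
  obtain Ty where Ty: "finite Ty" "Ty \<subseteq> S" "y \<in> lspan F Ty" using y by (rule lspan_finite_subset)
  define B where "B = Tx \<union> Ty"
  have B: "finite B" "B \<subseteq> S" using Tx Ty by (auto simp: B_def)
  have "x \<in> lspan F B" "y \<in> lspan F B"
    using Tx(3) Ty(3) lspan_mono[of Tx B F] lspan_mono[of Ty B F] by (auto simp: B_def)
  then obtain a b where a: "\<forall>s\<in>B. a s \<in> F" "x = (\<lambda>p. \<Sum>s\<in>B. a s * s p)"
    and b: "\<forall>s\<in>B. b s \<in> F" "y = (\<lambda>p. \<Sum>s\<in>B. b s * s p)"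
    unfolding lspan_finite_iff[OF B(1) subfield_0[OF F]] by blast
  have "(\<lambda>p. c * x p + y p) = (\<lambda>p. \<Sum>s\<in>B. (c * a s + b s) * s p)"
    by (simp add: a(2) b(2) sum_distrib_left sum.distrib algebra_simps)
  also have "\<dots> \<in> lspan F B"
    using a(1) b(1) c F B(1) by (intro lspan_sumI) (auto intro!: subfield_add subfield_mult)
  finally show ?thesis using lspan_mono[OF B(2)] by blast
qed

lemma lspan_lincomb:
  assumes F: "is_subfield F" and I: "finite I"
    and f: "\<And>i. i \<in> I \<Longrightarrow> f i \<in> lspan F S" and c: "\<And>i. i \<in> I \<Longrightarrow> c i \<in> F"
  shows "(\<lambda>p. \<Sum>i\<in>I. c i * f i p) \<in> lspan F S"
  using I f c
proof (induction I rule: finite_induct)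
  case empty
  then show ?case using lspan_zero by simp
next
  case (insert i I)
  then show ?case
    using lspan_add_scaled[OF F, of "f i" S "\<lambda>p. \<Sum>i\<in>I. c i * f i p" "c i"] by simp
qed

lemma lspan_subset_lspan:
  assumes F: "is_subfield F" and AB: "A \<subseteq> lspan F B"
  shows "lspan F A \<subseteq> lspan F B"
proof
  fix x assume "x \<in> lspan F A"
  then obtain T c where "finite T" "T \<subseteq> A" "c ` T \<subseteq> F" "x = (\<lambda>p. \<Sum>s\<in>T. c s * s p)"
    unfolding lspan_def by blast
  then show "x \<in> lspan F B"
    using AB lspan_lincomb[OF F, of T "\<lambda>s. s" B c] by auto
qed

lemma lspan_insert_split:
  assumes F: "is_subfield F" and B: "finite B" "b \<notin> B" and v: "v \<in> lspan F (insert b B)"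
  shows "\<exists>\<alpha>\<in>F. (\<lambda>p. v p - \<alpha> * b p) \<in> lspan F B"
proof -
  obtain C where C: "\<forall>s\<in>insert b B. C s \<in> F" "v = (\<lambda>p. \<Sum>s\<in>insert b B. C s * s p)"
    using v lspan_finite_iff[of "insert b B" F] B(1) subfield_0[OF F] by auto
  have "(\<lambda>p. v p - C b * b p) = (\<lambda>p. \<Sum>s\<in>B. C s * s p)"
    using B by (simp add: C(2))
  also have "\<dots> \<in> lspan F B"
    using C(1) B(1) by (intro lspan_sumI) auto
  finally show ?thesis using C(1) by blast
qed

lemma lspan_eliminate_pivot:
  assumes F: "is_subfield F" and x: "(\<lambda>p. x p - \<alpha> * b p) \<in> lspan F B" and y: "(\<lambda>p. y p - \<beta> * b p) \<in> lspan F B"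
    and \<alpha>: "\<alpha> \<in> F" and \<beta>: "\<beta> \<in> F" "\<beta> \<noteq> 0"
  shows "(\<lambda>p. x p - \<alpha> / \<beta> * y p) \<in> lspan F B"
proof -
  have "(\<lambda>p. - (\<alpha> / \<beta>) * (y p - \<beta> * b p) + (x p - \<alpha> * b p)) \<in> lspan F B"
    using F x y \<alpha> \<beta> by (intro lspan_add_scaled) (auto intro!: subfield_uminus subfield_divide)
  moreover have "(\<lambda>p. - (\<alpha> / \<beta>) * (y p - \<beta> * b p) + (x p - \<alpha> * b p)) = (\<lambda>p. x p - \<alpha> / \<beta> * y p)"
    using \<beta>(2) by (simp add: fun_eq_iff field_simps)
  ultimately show ?thesis by simp
qed

lemma sum_pivot_combination:
  fixes v :: "'i \<Rightarrow> 'a::comm_ring"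
  assumes "finite I" "i0 \<notin> I"
  shows "(\<Sum>i\<in>insert i0 I. (if i = i0 then - (\<Sum>j\<in>I. d j * r j) else d i) * v i)
    = (\<Sum>i\<in>I. d i * (v i - r i * v i0))"
proof -
  have "(\<Sum>i\<in>I. (if i = i0 then - (\<Sum>j\<in>I. d j * r j) else d i) * v i) = (\<Sum>i\<in>I. d i * v i)"
    using assms(2) by (intro sum.cong) auto
  then show ?thesis
    using assms by (simp add: right_diff_distrib sum_subtractf sum_distrib_right mult.assoc)
qed

text \<open>The induction eliminates one spanning vector by subtracting multiples of a pivot.\<close>

lemma lspan_card_less_dependent:
  fixes v :: "'i \<Rightarrow> 'c \<Rightarrow> 'a::field"
  assumes F: "is_subfield F" and B: "finite B"
  shows "finite I \<Longrightarrow> card B < card I \<Longrightarrow> (\<forall>i\<in>I. v i \<in> lspan F B) \<Longrightarrow>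
    \<exists>c. (\<forall>i\<in>I. c i \<in> F) \<and> (\<exists>i\<in>I. c i \<noteq> 0) \<and> (\<forall>p. (\<Sum>i\<in>I. c i * v i p) = 0)"
  using B
proof (induction B arbitrary: I v rule: finite_induct)
  case empty
  then obtain i0 where i0: "i0 \<in> I" by fastforce
  then have "v i0 = (\<lambda>p. 0)" using empty(3) lspan_empty by blast
  then have "(\<Sum>i\<in>I. (if i = i0 then 1 else 0) * v i p) = 0" for p
    by (intro sum.neutral) auto
  then show ?case using i0 F
    by (intro exI[of _ "\<lambda>i. if i = i0 then 1 else 0"]) (auto simp: subfield_0 subfield_1)
next
  case (insert b B I v)
  have "\<forall>i\<in>I. \<exists>\<alpha>. \<alpha> \<in> F \<and> (\<lambda>p. v i p - \<alpha> * b p) \<in> lspan F B"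
    using lspan_insert_split[OF F insert.hyps(1,2)] insert.prems(3) by blast
  from bchoice[OF this] obtain \<alpha> where \<alpha>: "\<forall>i\<in>I. \<alpha> i \<in> F \<and> (\<lambda>p. v i p - \<alpha> i * b p) \<in> lspan F B"
    by blast
  show ?case
  proof (cases "\<forall>i\<in>I. \<alpha> i = 0")
    case True
    then have "\<forall>i\<in>I. v i \<in> lspan F B" using \<alpha> by simp
    moreover have "card B < card I" using insert by simp
    ultimately show ?thesis using insert.IH insert.prems(1) by blast
  next
    case False
    then obtain i0 where i0: "i0 \<in> I" "\<alpha> i0 \<noteq> 0" by blast
    define r where "r i = \<alpha> i / \<alpha> i0" for i
    define I' where "I' = I - {i0}"
    have I': "I = insert i0 I'" "i0 \<notin> I'" "finite I'" using i0 insert.prems(1) by (auto simp: I'_def)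
    have "(\<lambda>p. v i p - r i * v i0 p) \<in> lspan F B" if "i \<in> I'" for i
      using lspan_eliminate_pivot[OF F, of "v i" "\<alpha> i" b B "v i0" "\<alpha> i0"] that i0 \<alpha>
      by (auto simp: I'_def r_def)
    moreover have "card B < card I'" using insert I' by simp
    ultimately obtain d where d: "\<forall>i\<in>I'. d i \<in> F" "\<exists>i\<in>I'. d i \<noteq> 0"
        "\<forall>p. (\<Sum>i\<in>I'. d i * (v i p - r i * v i0 p)) = 0"
      using insert.IH[of I' "\<lambda>i p. v i p - r i * v i0 p"] I'(3) by auto
    define c where "c i = (if i = i0 then - (\<Sum>j\<in>I'. d j * r j) else d i)" for i
    have "(\<Sum>i\<in>I. c i * v i p) = 0" for p
      using sum_pivot_combination[OF I'(3,2), of d r "\<lambda>i. v i p"] d(3) by (simp add: I'(1) c_def)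
    moreover have "\<forall>i\<in>I. c i \<in> F"
      using d(1) \<alpha> i0 F unfolding c_def r_def
      by (auto intro!: subfield_uminus subfield_sum subfield_mult subfield_divide simp: I'_def)
    moreover have "\<exists>i\<in>I. c i \<noteq> 0" using d(2) I' by (auto simp: c_def)
    ultimately show ?thesis by blast
  qed
qed

lemma lspan_remove_dependent:
  assumes F: "is_subfield F" and S: "finite S" and s0: "s0 \<in> S" "c s0 \<noteq> 0"
    and c: "\<forall>s\<in>S. c s \<in> F" and rel: "\<forall>p. (\<Sum>s\<in>S. c s * s p) = 0"
  shows "lspan F (S - {s0}) = lspan F S"
proof
  show "lspan F (S - {s0}) \<subseteq> lspan F S" by (rule lspan_mono) auto
  have "s0 = (\<lambda>p. \<Sum>s\<in>S - {s0}. (- c s / c s0) * s p)"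
  proof
    fix p
    have "c s0 * s0 p + (\<Sum>s\<in>S - {s0}. c s * s p) = 0"
      using rel S s0(1) by (simp add: sum.remove)
    then have "s0 p = - (\<Sum>s\<in>S - {s0}. c s * s p) / c s0"
      using s0(2) by (simp add: field_simps eq_neg_iff_add_eq_0 add.commute)
    then show "s0 p = (\<Sum>s\<in>S - {s0}. (- c s / c s0) * s p)"
      by (simp add: sum_divide_distrib sum_negf)
  qed
  moreover have "(\<lambda>p. \<Sum>s\<in>S - {s0}. (- c s / c s0) * s p) \<in> lspan F (S - {s0})"
    using S c F s0 by (intro lspan_sumI) (auto intro!: subfield_divide subfield_uminus)
  ultimately have "S \<subseteq> lspan F (S - {s0})"
    using lspan_superset[OF F, of "S - {s0}"] by auto
  then show "lspan F S \<subseteq> lspan F (S - {s0})" by (rule lspan_subset_lspan[OF F])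
qed

lemma kdim_exists:
  assumes "finite S0" "W = kspan k S0"
  shows "\<exists>S. finite S \<and> card S = kdim k W \<and> kspan k S = W"
  unfolding kdim_def by (rule LeastI[of _ "card S0"]) (use assms in auto)

lemma card_le_kdim:
  assumes F: "is_subfield k" and S0: "finite S0" "W = kspan k S0" and I: "finite I"
    and f: "\<forall>i\<in>I. f i \<in> W" and ind: "lin_indep k I f"
  shows "card I \<le> kdim k W"
proof (rule ccontr)
  assume "\<not> card I \<le> kdim k W"
  moreover obtain S where S: "finite S" "card S = kdim k W" "kspan k S = W"
    using kdim_exists[OF S0] by blast
  ultimately have "card S < card I" by simp
  moreover have "\<forall>i\<in>I. f i \<in> lspan k S" using f S by (simp add: kspan_eq_lspan)
  ultimately obtain c where "\<forall>i\<in>I. c i \<in> k" "\<exists>i\<in>I. c i \<noteq> 0" "\<forall>p. (\<Sum>i\<in>I. c i * f i p) = 0"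
    using lspan_card_less_dependent[OF F S(1) I] by blast
  then show False using ind unfolding lin_indep_def by blast
qed

lemma kdim_basis:
  assumes F: "is_subfield k" and S0: "finite S0" "W = kspan k S0"
  obtains S where "finite S" "card S = kdim k W" "kspan k S = W" "S \<subseteq> W" "lin_indep k S (\<lambda>s. s)"
proof -
  obtain S where S: "finite S" "card S = kdim k W" "kspan k S = W"
    using kdim_exists[OF S0] by blast
  have "lin_indep k S (\<lambda>s. s)"
    unfolding lin_indep_def
  proof (intro allI impI ballI, rule ccontr)
    fix c s0
    assume c: "(\<forall>s\<in>S. c s \<in> k) \<and> (\<forall>p. (\<Sum>s\<in>S. c s * s p) = 0)" and s0: "s0 \<in> S" "c s0 \<noteq> 0"
    have "kspan k (S - {s0}) = W"
      using lspan_remove_dependent[of k S s0 c] F S(1) s0 c S(3) by (simp add: kspan_eq_lspan)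
    moreover have "card (S - {s0}) < kdim k W" using card_Diff1_less[OF S(1) s0(1)] S(2) by simp
    ultimately show False
      unfolding kdim_def using S(1) by (metis (mono_tags, lifting) finite_Diff not_less_Least)
  qed
  moreover have "S \<subseteq> W" using S(3) lspan_superset[OF F, of S] by (simp add: kspan_eq_lspan)
  ultimately show ?thesis using S that by blast
qed

lemma kdim_pos:
  assumes F: "is_subfield k" and "finite S0" "W = kspan k S0" "x \<in> W" "x p \<noteq> 0"
  shows "1 \<le> kdim k W"
proof -
  have "lin_indep k {x} (\<lambda>s. s)" unfolding lin_indep_def using assms(5) by auto
  then show ?thesis using card_le_kdim[OF F assms(2,3), of "{x}" "\<lambda>s. s"] assms(4) by auto
qed

section \<open>Finiteness of the Galois group\<close>

lemma aut_0: "field_aut s \<Longrightarrow> s 0 = 0"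
  unfolding field_aut_def by (metis add_cancel_right_right)
lemma aut_add: "field_aut s \<Longrightarrow> s (x + y) = s x + s y" unfolding field_aut_def by blast
lemma aut_mult: "field_aut s \<Longrightarrow> s (x * y) = s x * s y" unfolding field_aut_def by blast
lemma aut_bij: "field_aut s \<Longrightarrow> bij s" unfolding field_aut_def by blast
lemma aut_inj: "field_aut s \<Longrightarrow> inj s" unfolding field_aut_def bij_def by blast
lemma aut_1: "field_aut s \<Longrightarrow> s 1 = 1"
proof -
  assume a: "field_aut s"
  then obtain x where x: "s x = 1" using aut_bij bij_pointE by metis
  have "s 1 * s x = s x" using aut_mult[OF a, of 1 x] by simp
  then show ?thesis using x by simp
qed
lemma aut_sum: "field_aut s \<Longrightarrow> s (sum f A) = (\<Sum>a\<in>A. s (f a))"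
  by (induction A rule: infinite_finite_induct) (auto simp: aut_0 aut_add)
lemma aut_power: "field_aut s \<Longrightarrow> s (x ^ n) = s x ^ n"
  by (induction n) (auto simp: aut_1 aut_mult)
lemma aut_nonzero: "field_aut s \<Longrightarrow> x \<noteq> 0 \<Longrightarrow> s x \<noteq> 0"
  using aut_inj[of s] aut_0[of s] by (metis injD)

lemma id_Aut_over: "id \<in> Aut_over K"
  by (simp add: Aut_over_def field_aut_def)

lemma Aut_over_comp: "\<sigma> \<in> Aut_over K \<Longrightarrow> \<tau> \<in> Aut_over K \<Longrightarrow> \<sigma> \<circ> \<tau> \<in> Aut_over K"
  by (auto simp: Aut_over_def field_aut_def intro: bij_comp)

lemma Aut_over_inv:
  assumes "\<sigma> \<in> Aut_over K"
  shows "inv \<sigma> \<in> Aut_over K"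
proof -
  have a: "field_aut \<sigma>" and fx: "\<forall>x\<in>K. \<sigma> x = x" using assms by (auto simp: Aut_over_def)
  have b: "bij \<sigma>" using a aut_bij by blast
  have i: "inj \<sigma>" using b bij_is_inj by blast
  have \<sigma>_inv: "\<sigma> (inv \<sigma> y) = y" for y using b by (simp add: bij_is_surj surj_f_inv_f)
  have "inv \<sigma> (x + y) = inv \<sigma> x + inv \<sigma> y" for x y
    by (rule inv_f_eq[OF i]) (simp add: aut_add[OF a] \<sigma>_inv)
  moreover have "inv \<sigma> (x * y) = inv \<sigma> x * inv \<sigma> y" for x y
    by (rule inv_f_eq[OF i]) (simp add: aut_mult[OF a] \<sigma>_inv)
  moreover have "inv \<sigma> x = x" if "x \<in> K" for x
    using that fx by (intro inv_f_eq[OF i]) auto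
  moreover have "bij (inv \<sigma>)" using b by (rule bij_imp_bij_inv)
  ultimately show ?thesis by (simp add: Aut_over_def field_aut_def)
qed

lemma finite_span_algebraic:
  fixes b :: "'a::field"
  assumes K: "is_subfield K" and B: "finite B" "fspan K B = UNIV"
  shows "\<exists>P. P \<noteq> 0 \<and> (\<forall>i. coeff P i \<in> K) \<and> poly P b = 0"
proof -
  define B' where "B' = (\<lambda>s (_::unit). s) ` B"
  have "(\<lambda>_::unit. b ^ i) \<in> lspan K B'" for i
  proof -
    have "b ^ i \<in> fspan K B" using B by simp
    then obtain T c where T: "finite T" "T \<subseteq> B" "c ` T \<subseteq> K" "b ^ i = (\<Sum>s\<in>T. c s * s)"
      unfolding fspan_def by blast
    have "(\<lambda>p. \<Sum>s\<in>T. c s * (\<lambda>s (_::unit). s) s p) \<in> lspan K B'"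
      using T lspan_superset[OF K, of B'] by (intro lspan_lincomb[OF K]) (auto simp: B'_def)
    then show ?thesis using T by simp
  qed
  moreover have "card B' < card {..card B}"
    using B card_image_le[of B "\<lambda>s (_::unit). s"] by (simp add: B'_def le_imp_less_Suc)
  ultimately obtain c where c: "\<forall>i\<in>{..card B}. c i \<in> K" "\<exists>i\<in>{..card B}. c i \<noteq> 0"
    "\<forall>p::unit. (\<Sum>i\<in>{..card B}. c i * b ^ i) = 0"
    using lspan_card_less_dependent[OF K _ finite_atMost, of B' "card B" "\<lambda>i _. b ^ i"] B
    by (auto simp: B'_def)
  define P where "P = (\<Sum>i\<le>card B. monom (c i) i)"
  have coeff_P: "coeff P i = (if i \<le> card B then c i else 0)" for i
    by (simp add: P_def coeff_sum coeff_monom)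
  obtain i where "i \<le> card B" "c i \<noteq> 0" using c(2) by auto
  then have "P \<noteq> 0" using coeff_P[of i] by auto
  moreover have "\<forall>i. coeff P i \<in> K" using c(1) subfield_0[OF K] by (simp add: coeff_P)
  moreover have "poly P b = 0" using c(3) by (simp add: P_def poly_sum poly_monom)
  ultimately show ?thesis by blast
qed

lemma Aut_over_poly_root:
  assumes \<sigma>: "\<sigma> \<in> Aut_over K" and P: "\<forall>i. coeff P i \<in> K" and root: "poly P b = 0"
  shows "poly P (\<sigma> b) = 0"
proof -
  have a: "field_aut \<sigma>" and K_fixed: "\<forall>x\<in>K. \<sigma> x = x" using \<sigma> by (auto simp: Aut_over_def)
  have "poly P (\<sigma> b) = (\<Sum>i\<le>degree P. coeff P i * \<sigma> b ^ i)" by (rule poly_altdef)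
  also have "\<dots> = \<sigma> (\<Sum>i\<le>degree P. coeff P i * b ^ i)"
    using P K_fixed by (simp add: aut_sum[OF a] aut_mult[OF a] aut_power[OF a])
  also have "\<dots> = 0" using root aut_0[OF a] by (simp add: poly_altdef)
  finally show ?thesis .
qed

lemma Aut_over_eqI:
  assumes \<sigma>: "\<sigma> \<in> Aut_over K" and \<tau>: "\<tau> \<in> Aut_over K" and B: "fspan K B = UNIV"
    and eq: "\<And>b. b \<in> B \<Longrightarrow> \<sigma> b = \<tau> b"
  shows "\<sigma> = \<tau>"
proof
  fix x
  have a\<sigma>: "field_aut \<sigma>" and f\<sigma>: "\<forall>x\<in>K. \<sigma> x = x" using \<sigma> by (auto simp: Aut_over_def)
  have a\<tau>: "field_aut \<tau>" and f\<tau>: "\<forall>x\<in>K. \<tau> x = x" using \<tau> by (auto simp: Aut_over_def)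
  have "x \<in> fspan K B" using B by simp
  then obtain T c where T: "T \<subseteq> B" "c ` T \<subseteq> K" "x = (\<Sum>s\<in>T. c s * s)"
    unfolding fspan_def by blast
  have "\<sigma> x = (\<Sum>b\<in>T. c b * \<sigma> b)" using T f\<sigma> by (simp add: aut_sum[OF a\<sigma>] aut_mult[OF a\<sigma>] subset_eq)
  also have "\<dots> = (\<Sum>b\<in>T. c b * \<tau> b)" using T eq by (intro sum.cong) auto
  also have "\<dots> = \<tau> x" using T f\<tau> by (simp add: aut_sum[OF a\<tau>] aut_mult[OF a\<tau>] subset_eq)
  finally show "\<sigma> x = \<tau> x" .
qed

text \<open>An automorphism is determined by its values on a finite spanning set, and each such value
  is a root of a fixed nonzero polynomial over K.\<close>

lemma finite_Aut_over:
  assumes G: "finite_galois_over K"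
  shows "finite (Aut_over K)"
proof -
  have K: "is_subfield K" using G by (simp add: finite_galois_over_def)
  obtain B where B: "finite B" "fspan K B = UNIV" using G unfolding finite_galois_over_def by blast
  obtain P where P: "\<And>b. P b \<noteq> 0 \<and> (\<forall>i. coeff (P b) i \<in> K) \<and> poly (P b) b = 0"
    using finite_span_algebraic[OF K B] by metis
  define R where "R b = {y. poly (P b) y = 0}" for b
  have "finite (R b)" for b using poly_roots_finite[of "P b"] P[of b] by (simp add: R_def)
  then have "finite (PiE B R)" using B(1) by (intro finite_PiE) auto
  moreover have "\<forall>b\<in>B. \<sigma> b \<in> R b" if "\<sigma> \<in> Aut_over K" for \<sigma>
    using Aut_over_poly_root[OF that] P by (simp add: R_def)
  then have "(\<lambda>\<sigma>. restrict \<sigma> B) ` Aut_over K \<subseteq> PiE B R"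
    by (auto simp: restrict_PiE_iff)
  moreover have "inj_on (\<lambda>\<sigma>. restrict \<sigma> B) (Aut_over K)"
  proof (rule inj_onI)
    fix \<sigma> \<tau> assume \<sigma>: "\<sigma> \<in> Aut_over K" and \<tau>: "\<tau> \<in> Aut_over K" and eq: "restrict \<sigma> B = restrict \<tau> B"
    show "\<sigma> = \<tau>" by (rule Aut_over_eqI[OF \<sigma> \<tau> B(2)]) (metis eq restrict_apply)
  qed
  ultimately show ?thesis using inj_on_finite by blast
qed

section \<open>Lexicographic order on exponent vectors\<close>

text \<open>A wrapper type, so that \<open>nat \<Rightarrow> int\<close> can carry the lexicographic order
  instead of the pointwise one.\<close>

datatype lex_vec = Lex "nat \<Rightarrow> int"

instantiation lex_vec :: linorder
begin

fun less_lex_vec :: "lex_vec \<Rightarrow> lex_vec \<Rightarrow> bool" where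
  "less_lex_vec (Lex a) (Lex b) \<longleftrightarrow> (\<exists>i. a i < b i \<and> (\<forall>j<i. a j = b j))"

definition less_eq_lex_vec :: "lex_vec \<Rightarrow> lex_vec \<Rightarrow> bool" where
  "less_eq_lex_vec x y \<longleftrightarrow> x < y \<or> x = y"

lemma lex_vec_irrefl: "\<not> (x::lex_vec) < x"
  by (cases x) auto

lemma lex_vec_trans: "(x::lex_vec) < y \<Longrightarrow> y < z \<Longrightarrow> x < z"
proof (cases x, cases y, cases z)
  fix a b c assume xyz: "x = Lex a" "y = Lex b" "z = Lex c" and "x < y" "y < z"
  then obtain i j where i: "a i < b i" "\<forall>l<i. a l = b l" and j: "b j < c j" "\<forall>l<j. b l = c l" by auto
  show "x < z"
  proof (cases i j rule: linorder_cases)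
    case less then show ?thesis using i j xyz by (auto intro!: exI[of _ i])
  next
    case equal then show ?thesis using i j xyz by (auto intro!: exI[of _ i])
  next
    case greater then show ?thesis using i j xyz by (auto intro!: exI[of _ j])
  qed
qed

lemma lex_vec_total: "(x::lex_vec) < y \<or> x = y \<or> y < x"
proof (cases x, cases y)
  fix a b assume xy: "x = Lex a" "y = Lex b"
  show ?thesis
  proof (cases "a = b")
    case True then show ?thesis using xy by simp
  next
    case False
    then have ex: "\<exists>i. a i \<noteq> b i" by auto
    define i where "i = (LEAST i. a i \<noteq> b i)"
    have ne: "a i \<noteq> b i" unfolding i_def by (rule LeastI_ex[OF ex])
    have eq: "\<forall>j<i. a j = b j" unfolding i_def using not_less_Least by blast
    show ?thesis
    proof (cases "a i < b i")
      case True then show ?thesis using eq xy by auto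
    next
      case False then have "b i < a i" using ne by simp
      then show ?thesis using eq xy by (auto intro!: exI[of _ i])
    qed
  qed
qed

instance
proof
  fix x y z :: lex_vec
  show "(x < y) = (x \<le> y \<and> \<not> y \<le> x)"
    unfolding less_eq_lex_vec_def using lex_vec_irrefl[of x] lex_vec_trans[of x y x] by blast
  show "x \<le> x" unfolding less_eq_lex_vec_def by simp
  show "x \<le> y \<Longrightarrow> y \<le> z \<Longrightarrow> x \<le> z" unfolding less_eq_lex_vec_def using lex_vec_trans by blast
  show "x \<le> y \<Longrightarrow> y \<le> x \<Longrightarrow> x = y" unfolding less_eq_lex_vec_def using lex_vec_irrefl lex_vec_trans by blast
  show "x \<le> y \<or> y \<le> x" unfolding less_eq_lex_vec_def using lex_vec_total by blast
qed

end

definition vadd :: "(nat \<Rightarrow> int) \<Rightarrow> (nat \<Rightarrow> int) \<Rightarrow> (nat \<Rightarrow> int)" where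
  "vadd a b = (\<lambda>i. a i + b i)"

definition vzero :: "nat \<Rightarrow> int" where
  "vzero = (\<lambda>_. 0)"

lemma vadd_comm: "vadd a b = vadd b a"
  by (auto simp: vadd_def)

lemma vadd_left_cancel: "vadd s b = vadd s t \<Longrightarrow> b = t"
  by (auto simp: vadd_def fun_eq_iff)

lemma Zn_vadd: "a \<in> Zn n \<Longrightarrow> b \<in> Zn n \<Longrightarrow> vadd a b \<in> Zn n"
  by (auto simp: Zn_def vadd_def)

lemma Zn_vzero: "vzero \<in> Zn n"
  by (simp add: vzero_def Zn_def)

lemma Lex_vadd_less: "Lex a < Lex b \<Longrightarrow> Lex (vadd a c) < Lex (vadd b c)"
  by (auto simp: vadd_def)

lemma Lex_vadd_le: "Lex a \<le> Lex b \<Longrightarrow> Lex (vadd a c) \<le> Lex (vadd b c)"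
  using Lex_vadd_less unfolding less_eq_lex_vec_def by blast

lemma Lex_vadd_mono: "Lex a \<le> Lex s \<Longrightarrow> Lex b \<le> Lex t \<Longrightarrow> Lex (vadd a b) \<le> Lex (vadd s t)"
  using Lex_vadd_le[of a s b] Lex_vadd_le[of b t s] by (simp add: vadd_comm)

lemma Lex_vadd_eq_max:
  assumes "Lex a \<le> Lex s" "Lex b \<le> Lex t" "vadd a b = vadd s t"
  shows "a = s \<and> b = t"
proof -
  have "a = s"
  proof (rule ccontr)
    assume "a \<noteq> s"
    then have "Lex a < Lex s" using assms(1) by (simp add: less_le)
    then have "Lex (vadd a b) < Lex (vadd s b)" by (rule Lex_vadd_less)
    also have "Lex (vadd s b) \<le> Lex (vadd s t)" using Lex_vadd_mono[OF order_refl assms(2)] .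
    finally show False using assms(3) by simp
  qed
  then show ?thesis using assms(3) vadd_left_cancel by blast
qed

section \<open>The skew monoid ring\<close>

lemma ssupp_iota: "ssupp (iota a) = (if a = 0 then {} else {id})"
  by (auto simp: ssupp_def iota_def)

lemma ssupp_lincomb: "ssupp (\<lambda>p. \<Sum>i\<in>I. c i * x i p) \<subseteq> (\<Union>i\<in>I. ssupp (x i))"
proof
  fix p assume "p \<in> ssupp (\<lambda>p. \<Sum>i\<in>I. c i * x i p)"
  then have "(\<Sum>i\<in>I. c i * x i p) \<noteq> 0" by (simp add: ssupp_def)
  then obtain i where "i \<in> I" "c i * x i p \<noteq> 0" by (meson sum.neutral)
  then show "p \<in> (\<Union>i\<in>I. ssupp (x i))" by (auto simp: ssupp_def)
qed

lemma skew_mult_nonzero: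
  assumes "skew_mult x y p \<noteq> 0"
  shows "\<exists>m\<in>ssupp x. \<exists>m'\<in>ssupp y. m \<circ> m' = p"
proof (rule ccontr)
  assume "\<not> ?thesis"
  then have E: "{(m, m'). m \<in> ssupp x \<and> m' \<in> ssupp y \<and> m \<circ> m' = p} = {}" by auto
  show False using assms unfolding skew_mult_def E by simp
qed

lemma skew_mult_expand:
  assumes A: "finite A" and B: "finite B" and sx: "ssupp x \<subseteq> A" and sy: "ssupp y \<subseteq> B"
    and A0: "\<forall>m\<in>A. m 0 = 0"
  shows "skew_mult x y p = (\<Sum>m\<in>A. \<Sum>m'\<in>B. if m \<circ> m' = p then x m * m (y m') else 0)"
proof -
  have "skew_mult x y p = (\<Sum>(m, m')\<in>{(m, m'). m \<in> A \<and> m' \<in> B \<and> m \<circ> m' = p}. x m * m (y m'))"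
    unfolding skew_mult_def
  proof (rule sum.mono_neutral_left)
    show "finite {(m, m'). m \<in> A \<and> m' \<in> B \<and> m \<circ> m' = p}"
      by (rule finite_subset[of _ "A \<times> B"]) (use A B in auto)
  qed (use sx sy A0 in \<open>auto simp: ssupp_def\<close>)
  also have "\<dots> = (\<Sum>z\<in>{z \<in> A \<times> B. fst z \<circ> snd z = p}. x (fst z) * fst z (y (snd z)))"
    by (rule sum.cong) (auto simp: split_beta)
  also have "\<dots> = (\<Sum>z\<in>A \<times> B. if fst z \<circ> snd z = p then x (fst z) * fst z (y (snd z)) else 0)"
    using A B by (intro sum.inter_filter) auto
  also have "\<dots> = (\<Sum>(m, m')\<in>A \<times> B. if m \<circ> m' = p then x m * m (y m') else 0)"
    by (simp add: split_beta)
  also have "\<dots> = (\<Sum>m\<in>A. \<Sum>m'\<in>B. if m \<circ> m' = p then x m * m (y m') else 0)"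
    by (subst sum.cartesian_product[symmetric]) (simp add: split_beta)
  finally show ?thesis .
qed

lemma skew_mult_iota_left: "skew_mult (iota a) x = (\<lambda>p. a * x p)"
proof
  fix p
  show "skew_mult (iota a) x p = a * x p"
  proof (cases "a = 0 \<or> p \<notin> ssupp x")
    case True
    then have E: "{(m, m'). m \<in> ssupp (iota a) \<and> m' \<in> ssupp x \<and> m \<circ> m' = p} = {}"
      by (auto simp: ssupp_iota)
    show ?thesis using True unfolding skew_mult_def E by (auto simp: ssupp_def)
  next
    case False
    then have "{(m, m'). m \<in> ssupp (iota a) \<and> m' \<in> ssupp x \<and> m \<circ> m' = p} = {(id, p)}"
      by (auto simp: ssupp_iota)
    then show ?thesis using False by (simp add: skew_mult_def iota_def)
  qed
qed

lemma skew_mult_iota_iota: "skew_mult (iota a) (iota b) = iota (a * b)"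
  unfolding skew_mult_iota_left by (auto simp: iota_def)

definition is_scalar :: "'L::field skew \<Rightarrow> bool" where
  "is_scalar x \<longleftrightarrow> (\<forall>p. p \<noteq> id \<longrightarrow> x p = 0)"

lemma is_scalar_iota: "is_scalar (iota a)"
  by (simp add: is_scalar_def iota_def)

lemma is_scalar_eq_iota:
  assumes "is_scalar x"
  shows "x = iota (x id)"
proof
  fix p show "x p = iota (x id) p" using assms by (cases "p = id") (auto simp: is_scalar_def iota_def)
qed

lemma is_scalar_mult: "is_scalar x \<Longrightarrow> is_scalar y \<Longrightarrow> is_scalar (skew_mult x y)"
  by (metis skew_mult_iota_iota is_scalar_iota is_scalar_eq_iota)

lemma is_scalar_lspan: "(\<And>x. x \<in> S \<Longrightarrow> is_scalar x) \<Longrightarrow> y \<in> lspan F S \<Longrightarrow> is_scalar y"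
  unfolding lspan_def is_scalar_def by (auto intro!: sum.neutral)

lemma is_scalar_vprods: "(\<And>x. x \<in> S \<Longrightarrow> is_scalar x) \<Longrightarrow> x \<in> vprods S m \<Longrightarrow> is_scalar x"
proof (induction m arbitrary: x)
  case 0 then show ?case by (simp add: skew_one_def is_scalar_iota)
next
  case (Suc m)
  then obtain a b where "x = skew_mult a b" "a \<in> vprods S m" "b \<in> S" by (auto simp: set_prod_def)
  then show ?case using Suc by (auto intro!: is_scalar_mult)
qed

lemma vprods_foldl:
  "x \<in> vprods V m \<Longrightarrow> set L \<subseteq> V \<Longrightarrow> foldl skew_mult x L \<in> vprods V (m + length L)"
proof (induction L arbitrary: x m)
  case Nil then show ?case by simp
next
  case (Cons v L)
  have "skew_mult x v \<in> vprods V (Suc m)" using Cons.prems by (auto simp: set_prod_def)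
  from Cons.IH[OF this] Cons.prems show ?case by simp
qed

lemma vprods_mono: "V \<subseteq> V' \<Longrightarrow> vprods V m \<subseteq> vprods V' m"
  by (induction m) (auto simp: set_prod_def)

lemma finite_vprods: "finite S \<Longrightarrow> finite (vprods S m)"
proof (induction m)
  case (Suc m)
  have "set_prod (vprods S m) S = (\<lambda>(a, b). skew_mult a b) ` (vprods S m \<times> S)"
    by (auto simp: set_prod_def)
  then show ?case using Suc by simp
qed simp

section \<open>Leading exponents in the skew monoid ring over \<open>\<int>\<^sup>n\<close>\<close>

locale skew_Zn =
  fixes k :: "'L::field set" and M :: "('L \<Rightarrow> 'L) set" and n :: nat
    and \<phi> :: "(nat \<Rightarrow> int) \<Rightarrow> ('L \<Rightarrow> 'L)"
  assumes k_subfield: "is_subfield k"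
    and M_sub: "M \<subseteq> Aut_over k" and M_id: "id \<in> M" and M_comp: "\<forall>m\<in>M. \<forall>m'\<in>M. m \<circ> m' \<in> M"
    and \<phi>_bij: "bij_betw \<phi> (Zn n) M"
    and \<phi>_hom: "\<forall>a\<in>Zn n. \<forall>b\<in>Zn n. \<phi> (\<lambda>i. a i + b i) = \<phi> a \<circ> \<phi> b"
begin

lemma M_aut: "m \<in> M \<Longrightarrow> field_aut m"
  using M_sub by (auto simp: Aut_over_def)

lemma M_fix: "m \<in> M \<Longrightarrow> c \<in> k \<Longrightarrow> m c = c"
  using M_sub by (auto simp: Aut_over_def)

lemma M_0: "m \<in> M \<Longrightarrow> m 0 = 0"
  using M_aut aut_0 by blast

lemma carrier_finite: "x \<in> skew_carrier M \<Longrightarrow> finite (ssupp x)"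
  by (simp add: skew_carrier_def)

lemma carrier_ssupp: "x \<in> skew_carrier M \<Longrightarrow> ssupp x \<subseteq> M"
  by (simp add: skew_carrier_def)

lemma mult_carrier:
  assumes x: "x \<in> skew_carrier M" and y: "y \<in> skew_carrier M"
  shows "skew_mult x y \<in> skew_carrier M"
proof -
  have "ssupp (skew_mult x y) \<subseteq> (\<lambda>(m, m'). m \<circ> m') ` (ssupp x \<times> ssupp y)"
    by (auto simp: ssupp_def dest!: skew_mult_nonzero)
  moreover have "(\<lambda>(m, m'). m \<circ> m') ` (ssupp x \<times> ssupp y) \<subseteq> M"
    using carrier_ssupp[OF x] carrier_ssupp[OF y] M_comp by auto
  moreover have "finite ((\<lambda>(m, m'). m \<circ> m') ` (ssupp x \<times> ssupp y))"
    using carrier_finite[OF x] carrier_finite[OF y] by auto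
  ultimately show ?thesis unfolding skew_carrier_def using finite_subset by blast
qed

lemma lincomb_carrier:
  assumes "finite I" "\<And>i. i \<in> I \<Longrightarrow> x i \<in> skew_carrier M"
  shows "(\<lambda>p. \<Sum>i\<in>I. c i * x i p) \<in> skew_carrier M"
proof -
  have "finite (\<Union>i\<in>I. ssupp (x i))" "(\<Union>i\<in>I. ssupp (x i)) \<subseteq> M"
    using assms carrier_finite carrier_ssupp by auto
  moreover have "ssupp (\<lambda>p. \<Sum>i\<in>I. c i * x i p) \<subseteq> (\<Union>i\<in>I. ssupp (x i))"
    by (rule ssupp_lincomb)
  ultimately show ?thesis unfolding skew_carrier_def by (auto intro: finite_subset)
qed

lemma lspan_carrier:
  assumes "S \<subseteq> skew_carrier M"
  shows "lspan F S \<subseteq> skew_carrier M"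
proof
  fix y assume "y \<in> lspan F S"
  then obtain T c where "finite T" "T \<subseteq> S" "y = (\<lambda>p. \<Sum>s\<in>T. c s * s p)"
    unfolding lspan_def by blast
  then show "y \<in> skew_carrier M" using assms lincomb_carrier[of T "\<lambda>s. s" c] by auto
qed

lemma iota_carrier: "iota a \<in> skew_carrier M"
  using M_id by (auto simp: skew_carrier_def ssupp_iota)

lemma is_scalar_carrier: "is_scalar x \<Longrightarrow> x \<in> skew_carrier M"
  using is_scalar_eq_iota iota_carrier by metis

lemma skew_one_carrier: "skew_one \<in> skew_carrier M"
  by (simp add: skew_one_def iota_carrier)

lemma mult_one_right:
  assumes x: "x \<in> skew_carrier M"
  shows "skew_mult x skew_one = x"
proof
  fix p
  show "skew_mult x skew_one p = x p"
  proof (cases "p \<in> ssupp x")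
    case True
    then have "{(m, m'). m \<in> ssupp x \<and> m' \<in> ssupp skew_one \<and> m \<circ> m' = p} = {(p, id)}"
      by (auto simp: ssupp_iota skew_one_def)
    moreover have "p 1 = 1" using True carrier_ssupp[OF x] M_aut aut_1 by blast
    ultimately show ?thesis by (simp add: skew_mult_def skew_one_def iota_def)
  next
    case False
    then have E: "{(m, m'). m \<in> ssupp x \<and> m' \<in> ssupp skew_one \<and> m \<circ> m' = p} = {}"
      by (auto simp: ssupp_iota skew_one_def)
    show ?thesis using False unfolding skew_mult_def E by (simp add: ssupp_def)
  qed
qed

lemma mult_one_left: "skew_mult skew_one x = x"
  by (simp add: skew_one_def skew_mult_iota_left)

lemma mult_lincomb_left:
  assumes I: "finite I" and x: "\<And>i. i \<in> I \<Longrightarrow> x i \<in> skew_carrier M" and y: "y \<in> skew_carrier M"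
  shows "skew_mult (\<lambda>p. \<Sum>i\<in>I. c i * x i p) y = (\<lambda>p. \<Sum>i\<in>I. c i * skew_mult (x i) y p)"
proof
  fix p
  define A where "A = (\<Union>i\<in>I. ssupp (x i))"
  have "A \<subseteq> M" using x carrier_ssupp by (auto simp: A_def)
  then have A: "finite A" "\<forall>m\<in>A. m 0 = 0" using I x carrier_finite M_0 by (auto simp: A_def)
  have sA: "ssupp (\<lambda>p. \<Sum>i\<in>I. c i * x i p) \<subseteq> A" unfolding A_def by (rule ssupp_lincomb)
  have sAi: "ssupp (x i) \<subseteq> A" if "i \<in> I" for i using that by (auto simp: A_def)
  have By: "finite (ssupp y)" using carrier_finite[OF y] .
  have "skew_mult (\<lambda>p. \<Sum>i\<in>I. c i * x i p) y p =
      (\<Sum>m\<in>A. \<Sum>m'\<in>ssupp y. if m \<circ> m' = p then (\<Sum>i\<in>I. c i * x i m) * m (y m') else 0)"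
    by (rule skew_mult_expand[OF A(1) By sA order_refl A(2)])
  also have "\<dots> = (\<Sum>m\<in>A. \<Sum>m'\<in>ssupp y. \<Sum>i\<in>I. c i * (if m \<circ> m' = p then x i m * m (y m') else 0))"
    by (intro sum.cong refl) (auto simp: sum_distrib_right mult.assoc)
  also have "\<dots> = (\<Sum>i\<in>I. c i * (\<Sum>m\<in>A. \<Sum>m'\<in>ssupp y. if m \<circ> m' = p then x i m * m (y m') else 0))"
    by (simp add: sum_distrib_left sum.swap[of _ I])
  also have "\<dots> = (\<Sum>i\<in>I. c i * skew_mult (x i) y p)"
    using skew_mult_expand[OF A(1) By sAi order_refl A(2)] by simp
  finally show "skew_mult (\<lambda>p. \<Sum>i\<in>I. c i * x i p) y p = (\<Sum>i\<in>I. c i * skew_mult (x i) y p)" .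
qed

text \<open>Unlike left coefficients, right coefficients pass through the twist only when they are
  fixed by \<open>M\<close>, i.e. lie in \<open>k\<close>.\<close>

lemma mult_lincomb_right:
  assumes I: "finite I" and y: "\<And>i. i \<in> I \<Longrightarrow> y i \<in> skew_carrier M" and x: "x \<in> skew_carrier M"
    and d: "\<And>i. i \<in> I \<Longrightarrow> d i \<in> k"
  shows "skew_mult x (\<lambda>p. \<Sum>i\<in>I. d i * y i p) = (\<lambda>p. \<Sum>i\<in>I. d i * skew_mult x (y i) p)"
proof
  fix p
  define B where "B = (\<Union>i\<in>I. ssupp (y i))"
  have B: "finite B" using I y carrier_finite by (auto simp: B_def)
  have Ax: "finite (ssupp x)" "\<forall>m\<in>ssupp x. m 0 = 0" using carrier_finite[OF x] carrier_ssupp[OF x] M_0 by auto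
  have sB: "ssupp (\<lambda>p. \<Sum>i\<in>I. d i * y i p) \<subseteq> B" unfolding B_def by (rule ssupp_lincomb)
  have sBi: "ssupp (y i) \<subseteq> B" if "i \<in> I" for i using that by (auto simp: B_def)
  have twist: "m (\<Sum>i\<in>I. d i * y i m') = (\<Sum>i\<in>I. d i * m (y i m'))" if "m \<in> ssupp x" for m m'
  proof -
    have a: "field_aut m" using that carrier_ssupp[OF x] M_aut by auto
    show ?thesis using d that carrier_ssupp[OF x] M_fix by (auto simp: aut_sum[OF a] aut_mult[OF a] intro!: sum.cong)
  qed
  have "skew_mult x (\<lambda>p. \<Sum>i\<in>I. d i * y i p) p =
      (\<Sum>m\<in>ssupp x. \<Sum>m'\<in>B. if m \<circ> m' = p then x m * m (\<Sum>i\<in>I. d i * y i m') else 0)"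
    by (rule skew_mult_expand[OF Ax(1) B order_refl sB Ax(2)])
  also have "\<dots> = (\<Sum>m\<in>ssupp x. \<Sum>m'\<in>B. \<Sum>i\<in>I. d i * (if m \<circ> m' = p then x m * m (y i m') else 0))"
    by (intro sum.cong refl) (auto simp: twist sum_distrib_left mult.assoc mult.left_commute)
  also have "\<dots> = (\<Sum>i\<in>I. d i * (\<Sum>m\<in>ssupp x. \<Sum>m'\<in>B. if m \<circ> m' = p then x m * m (y i m') else 0))"
    by (simp add: sum_distrib_left sum.swap[of _ I])
  also have "\<dots> = (\<Sum>i\<in>I. d i * skew_mult x (y i) p)"
    using skew_mult_expand[OF Ax(1) B order_refl sBi Ax(2)] by simp
  finally show "skew_mult x (\<lambda>p. \<Sum>i\<in>I. d i * y i p) p = (\<Sum>i\<in>I. d i * skew_mult x (y i) p)" .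
qed

lemma foldl_mult_lincomb:
  "finite I \<Longrightarrow> (\<And>i. i \<in> I \<Longrightarrow> x i \<in> skew_carrier M) \<Longrightarrow> set L \<subseteq> skew_carrier M \<Longrightarrow>
   foldl skew_mult (\<lambda>p. \<Sum>i\<in>I. c i * x i p) L = (\<lambda>p. \<Sum>i\<in>I. c i * foldl skew_mult (x i) L p)"
proof (induction L arbitrary: x)
  case Nil then show ?case by simp
next
  case (Cons v L)
  have v: "v \<in> skew_carrier M" using Cons.prems by auto
  have "skew_mult (\<lambda>p. \<Sum>i\<in>I. c i * x i p) v = (\<lambda>p. \<Sum>i\<in>I. c i * skew_mult (x i) v p)"
    by (rule mult_lincomb_left[OF Cons.prems(1,2) v])
  moreover have "\<And>i. i \<in> I \<Longrightarrow> skew_mult (x i) v \<in> skew_carrier M"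
    using Cons.prems(2) v by (rule mult_carrier)
  ultimately show ?case using Cons.IH[of "\<lambda>i. skew_mult (x i) v"] Cons.prems by simp
qed

lemma \<phi>_inj: "inj_on \<phi> (Zn n)" using \<phi>_bij by (simp add: bij_betw_def)
lemma \<phi>_image: "\<phi> ` Zn n = M" using \<phi>_bij by (simp add: bij_betw_def)
lemma \<phi>_in_M: "a \<in> Zn n \<Longrightarrow> \<phi> a \<in> M" using \<phi>_image by auto
lemma \<phi>_surj: "m \<in> M \<Longrightarrow> \<exists>a\<in>Zn n. \<phi> a = m" using \<phi>_image by auto
lemma \<phi>_vadd: "a \<in> Zn n \<Longrightarrow> b \<in> Zn n \<Longrightarrow> \<phi> (vadd a b) = \<phi> a \<circ> \<phi> b"
  using \<phi>_hom by (simp add: vadd_def)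

lemma \<phi>_vzero: "\<phi> vzero = id"
proof -
  have "\<phi> vzero = \<phi> vzero \<circ> \<phi> vzero" using \<phi>_vadd[OF Zn_vzero Zn_vzero] by (simp add: vadd_def vzero_def)
  moreover have "inj (\<phi> vzero)" using M_aut[OF \<phi>_in_M[OF Zn_vzero]] aut_inj by blast
  ultimately show ?thesis by (metis comp_apply eq_id_iff injD)
qed

definition is_lead :: "'L skew \<Rightarrow> (nat \<Rightarrow> int) \<Rightarrow> bool" where
  "is_lead x s \<longleftrightarrow> s \<in> Zn n \<and> x (\<phi> s) \<noteq> 0 \<and> (\<forall>r\<in>Zn n. x (\<phi> r) \<noteq> 0 \<longrightarrow> Lex r \<le> Lex s)"

definition lead :: "'L skew \<Rightarrow> (nat \<Rightarrow> int)" where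
  "lead x = (THE s. is_lead x s)"

lemma is_lead_exists:
  assumes x: "x \<in> skew_carrier M" and p: "x p \<noteq> 0"
  shows "\<exists>s. is_lead x s"
proof -
  define Sx where "Sx = {r \<in> Zn n. x (\<phi> r) \<noteq> 0}"
  have "\<phi> ` Sx \<subseteq> ssupp x" by (auto simp: Sx_def ssupp_def)
  then have "finite (\<phi> ` Sx)" using carrier_finite[OF x] finite_subset by blast
  moreover have "inj_on \<phi> Sx" using \<phi>_inj by (rule inj_on_subset) (auto simp: Sx_def)
  ultimately have fin: "finite Sx" using finite_imageD by blast
  have "p \<in> M" using p carrier_ssupp[OF x] by (auto simp: ssupp_def)
  then obtain a where "a \<in> Zn n" "\<phi> a = p" using \<phi>_surj by blast
  then have ne: "Sx \<noteq> {}" using p by (auto simp: Sx_def)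
  have "Max (Lex ` Sx) \<in> Lex ` Sx" using fin ne by (intro Max_in) auto
  then obtain s where s: "s \<in> Sx" "Max (Lex ` Sx) = Lex s" by blast
  have "\<forall>r\<in>Zn n. x (\<phi> r) \<noteq> 0 \<longrightarrow> Lex r \<le> Lex s"
    using fin s by (auto simp: Sx_def intro!: Max_ge[of "Lex ` Sx", unfolded s(2)])
  then show ?thesis using s by (auto simp: is_lead_def Sx_def)
qed

lemma is_lead_unique: "is_lead x s \<Longrightarrow> is_lead x t \<Longrightarrow> s = t"
  unfolding is_lead_def by (metis antisym lex_vec.inject)

lemma lead_eq: "is_lead x s \<Longrightarrow> lead x = s"
  unfolding lead_def using is_lead_unique by blast

lemma is_lead_support:
  assumes s: "is_lead x s" and x: "x \<in> skew_carrier M" and m: "m \<in> ssupp x"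
  shows "\<exists>a\<in>Zn n. m = \<phi> a \<and> Lex a \<le> Lex s"
proof -
  obtain a where a: "a \<in> Zn n" "\<phi> a = m" using m carrier_ssupp[OF x] \<phi>_surj by blast
  then have "Lex a \<le> Lex s" using s m by (auto simp: is_lead_def ssupp_def)
  then show ?thesis using a by blast
qed

text \<open>Only the product of the two leading terms reaches exponent \<open>s + t\<close>, and it is nonzero
  because the automorphism \<open>\<phi> s\<close> is injective.\<close>

lemma mult_support_pairs:
  assumes x: "x \<in> skew_carrier M" and y: "y \<in> skew_carrier M" and s: "is_lead x s" and t: "is_lead y t"
    and m: "m \<in> ssupp x" and m': "m' \<in> ssupp y" and mm: "m \<circ> m' = \<phi> r" and r: "r \<in> Zn n"
  shows "\<exists>a b. m = \<phi> a \<and> m' = \<phi> b \<and> vadd a b = r \<and> Lex a \<le> Lex s \<and> Lex b \<le> Lex t"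
proof -
  obtain a where a: "a \<in> Zn n" "m = \<phi> a" "Lex a \<le> Lex s"
    using is_lead_support[OF s x m] by blast
  obtain b where b: "b \<in> Zn n" "m' = \<phi> b" "Lex b \<le> Lex t"
    using is_lead_support[OF t y m'] by blast
  have "\<phi> (vadd a b) = \<phi> r" using \<phi>_vadd[OF a(1) b(1)] a b mm by simp
  then have "vadd a b = r" using \<phi>_inj Zn_vadd[OF a(1) b(1)] r by (auto dest: inj_onD)
  then show ?thesis using a b by blast
qed

lemma is_lead_mult:
  assumes x: "x \<in> skew_carrier M" and y: "y \<in> skew_carrier M"
    and s: "is_lead x s" and t: "is_lead y t"
  shows "is_lead (skew_mult x y) (vadd s t)"
proof -
  have sZ: "s \<in> Zn n" and tZ: "t \<in> Zn n" using s t by (auto simp: is_lead_def)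
  note pairs = mult_support_pairs[OF x y s t]
  have upper: "Lex r \<le> Lex (vadd s t)" if r: "r \<in> Zn n" and nz: "skew_mult x y (\<phi> r) \<noteq> 0" for r
  proof -
    obtain m m' where m: "m \<in> ssupp x" "m' \<in> ssupp y" "m \<circ> m' = \<phi> r"
      using skew_mult_nonzero[OF nz] by blast
    obtain a b where "vadd a b = r" "Lex a \<le> Lex s" "Lex b \<le> Lex t"
      using pairs[OF m r] by blast
    then show ?thesis using Lex_vadd_mono by blast
  qed
  have "{(m, m'). m \<in> ssupp x \<and> m' \<in> ssupp y \<and> m \<circ> m' = \<phi> (vadd s t)} = {(\<phi> s, \<phi> t)}"
  proof (intro equalityI subsetI)
    fix z assume "z \<in> {(m, m'). m \<in> ssupp x \<and> m' \<in> ssupp y \<and> m \<circ> m' = \<phi> (vadd s t)}"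
    then obtain m m' where z: "z = (m, m')" and m: "m \<in> ssupp x" "m' \<in> ssupp y" "m \<circ> m' = \<phi> (vadd s t)"
      by blast
    obtain a b where ab: "m = \<phi> a" "m' = \<phi> b" "vadd a b = vadd s t" "Lex a \<le> Lex s" "Lex b \<le> Lex t"
      using pairs[OF m Zn_vadd[OF sZ tZ]] by blast
    then have "a = s" "b = t" using Lex_vadd_eq_max[OF ab(4,5,3)] by auto
    then show "z \<in> {(\<phi> s, \<phi> t)}" using z ab by simp
  next
    fix z assume "z \<in> {(\<phi> s, \<phi> t)}"
    then show "z \<in> {(m, m'). m \<in> ssupp x \<and> m' \<in> ssupp y \<and> m \<circ> m' = \<phi> (vadd s t)}"
      using s t \<phi>_vadd[OF sZ tZ] by (auto simp: is_lead_def ssupp_def)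
  qed
  then have "skew_mult x y (\<phi> (vadd s t)) = x (\<phi> s) * \<phi> s (y (\<phi> t))"
    unfolding skew_mult_def by simp
  moreover have "\<phi> s (y (\<phi> t)) \<noteq> 0"
    using M_aut[OF \<phi>_in_M[OF sZ]] t aut_nonzero by (auto simp: is_lead_def)
  ultimately show ?thesis using s upper Zn_vadd[OF sZ tZ] by (simp add: is_lead_def)
qed

lemma is_lead_one: "is_lead skew_one vzero"
proof -
  have "r = vzero" if "r \<in> Zn n" "\<phi> r = id" for r
    using \<phi>_vzero inj_onD[OF \<phi>_inj, of r vzero] that Zn_vzero by auto
  then show ?thesis using Zn_vzero \<phi>_vzero by (auto simp: is_lead_def skew_one_def iota_def)
qed

lemma is_lead_foldl:
  "x \<in> skew_carrier M \<Longrightarrow> is_lead x s \<Longrightarrow> (\<forall>v\<in>set L. v \<in> skew_carrier M \<and> is_lead v (lead v)) \<Longrightarrow>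
    is_lead (foldl skew_mult x L) (\<lambda>i. s i + (\<Sum>v\<leftarrow>L. lead v i)) \<and> foldl skew_mult x L \<in> skew_carrier M"
proof (induction L arbitrary: x s)
  case Nil then show ?case by simp
next
  case (Cons v L)
  have v: "v \<in> skew_carrier M" "is_lead v (lead v)" using Cons.prems by auto
  have xv: "skew_mult x v \<in> skew_carrier M" using mult_carrier Cons.prems(1) v(1) by blast
  have "is_lead (skew_mult x v) (vadd s (lead v))" using is_lead_mult Cons.prems(1,2) v by blast
  from Cons.IH[OF xv this] Cons.prems(3)
  show ?case by (simp add: vadd_def algebra_simps)
qed

text \<open>Look at the largest leading exponent that carries a nonzero coefficient.\<close>

lemma distinct_leads_coeffs_zero:
  assumes A: "finite A" and P: "\<And>a. a \<in> A \<Longrightarrow> is_lead (P a) (\<tau> a)" and inj: "inj_on \<tau> A"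
    and rel: "\<forall>p. (\<Sum>a\<in>A. d a * P a p) = 0"
  shows "\<forall>a\<in>A. d a = 0"
proof (rule ccontr)
  define Nz where "Nz = {a \<in> A. d a \<noteq> 0}"
  assume "\<not> (\<forall>a\<in>A. d a = 0)"
  then have "Nz \<noteq> {}" "finite Nz" using A by (auto simp: Nz_def)
  then have "Max (Lex ` \<tau> ` Nz) \<in> Lex ` \<tau> ` Nz" by (intro Max_in) auto
  then obtain a0 where a0: "a0 \<in> Nz" "Max (Lex ` \<tau> ` Nz) = Lex (\<tau> a0)" by blast
  have a0A: "a0 \<in> A" using a0 by (simp add: Nz_def)
  have others: "d a * P a (\<phi> (\<tau> a0)) = 0" if "a \<in> A" "a \<noteq> a0" for a
  proof (cases "a \<in> Nz")
    case True
    have "Lex (\<tau> a) \<le> Lex (\<tau> a0)" using \<open>finite Nz\<close> True a0(2)[symmetric] by (auto intro!: Max_ge)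
    moreover have "\<tau> a \<noteq> \<tau> a0" using inj that a0A by (auto dest: inj_onD)
    ultimately have "\<not> Lex (\<tau> a0) \<le> Lex (\<tau> a)" by auto
    then have "P a (\<phi> (\<tau> a0)) = 0" using P[OF that(1)] P[OF a0A] by (auto simp: is_lead_def)
    then show ?thesis by simp
  qed (use that in \<open>auto simp: Nz_def\<close>)
  have "(\<Sum>a\<in>A - {a0}. d a * P a (\<phi> (\<tau> a0))) = 0" using others by (intro sum.neutral) auto
  then have "(\<Sum>a\<in>A. d a * P a (\<phi> (\<tau> a0))) = d a0 * P a0 (\<phi> (\<tau> a0))"
    using sum.remove[OF A a0A, of "\<lambda>a. d a * P a (\<phi> (\<tau> a0))"] by simp
  moreover have "d a0 * P a0 (\<phi> (\<tau> a0)) \<noteq> 0" using a0(1) P[OF a0A] by (simp add: Nz_def is_lead_def)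
  ultimately show False using rel by simp
qed

end

section \<open>Growth of products of subspaces\<close>

context skew_Zn
begin

lemma vprods_carrier: "V \<subseteq> skew_carrier M \<Longrightarrow> vprods V m \<subseteq> skew_carrier M"
  by (induction m) (auto simp: set_prod_def skew_one_carrier intro!: mult_carrier)

lemma vprods_one: "skew_one \<in> V \<Longrightarrow> skew_one \<in> vprods V m"
proof (induction m)
  case (Suc m)
  then have "skew_mult skew_one skew_one \<in> vprods V (Suc m)" by (auto simp: set_prod_def)
  then show ?case by (simp add: mult_one_left)
qed simp

lemma vprods_pad:
  assumes V: "V \<subseteq> skew_carrier M" "skew_one \<in> V" and x: "x \<in> vprods V m" and mm: "m \<le> m'"
  shows "x \<in> vprods V m'"
  using mm
proof (induction m' rule: dec_induct)
  case base then show ?case using x by simp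
next
  case (step j)
  have "skew_mult x skew_one \<in> vprods V (Suc j)" using step.IH V(2) by (auto simp: set_prod_def)
  moreover have "skew_mult x skew_one = x"
    using vprods_carrier[OF V(1)] step.IH by (auto intro: mult_one_right)
  ultimately show ?case by simp
qed

lemma vprods_lspan_subset:
  assumes S: "finite S" "S \<subseteq> skew_carrier M"
  shows "vprods (kspan k S) m \<subseteq> kspan k (vprods S m)"
proof (induction m)
  case 0 then show ?case using lspan_superset[OF k_subfield] by (auto simp: kspan_eq_lspan)
next
  case (Suc m)
  show ?case
  proof
    fix z assume "z \<in> vprods (kspan k S) (Suc m)"
    then obtain x v where z: "z = skew_mult x v" and x: "x \<in> vprods (kspan k S) m" and v: "v \<in> kspan k S"
      by (auto simp: set_prod_def)
    have "x \<in> kspan k (vprods S m)" using Suc x by blast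
    then obtain T c where T: "finite T" "T \<subseteq> vprods S m" "c ` T \<subseteq> k" "x = (\<lambda>p. \<Sum>q\<in>T. c q * q p)"
      unfolding kspan_eq_lspan lspan_def by blast
    obtain T' d where T': "finite T'" "T' \<subseteq> S" "d ` T' \<subseteq> k" "v = (\<lambda>p. \<Sum>s\<in>T'. d s * s p)"
      using v unfolding kspan_eq_lspan lspan_def by blast
    have Tc: "\<And>q. q \<in> T \<Longrightarrow> q \<in> skew_carrier M" using T(2) vprods_carrier[OF S(2)] by auto
    have T'c: "\<And>s. s \<in> T' \<Longrightarrow> s \<in> skew_carrier M" using T'(2) S(2) by auto
    have vc: "v \<in> skew_carrier M" unfolding T'(4) by (rule lincomb_carrier[OF T'(1) T'c])
    have "z = (\<lambda>p. \<Sum>q\<in>T. c q * skew_mult q v p)"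
      unfolding z T(4) by (rule mult_lincomb_left[OF T(1) Tc vc])
    also have "\<dots> = (\<lambda>p. \<Sum>q\<in>T. c q * (\<Sum>s\<in>T'. d s * skew_mult q s p))"
    proof (intro ext sum.cong refl)
      fix p q assume q: "q \<in> T"
      have "skew_mult q v = (\<lambda>p. \<Sum>s\<in>T'. d s * skew_mult q s p)"
        unfolding T'(4) using mult_lincomb_right[of T' "\<lambda>s. s" q d] T'(1) T'c Tc[OF q] T'(3) by auto
      then show "c q * skew_mult q v p = c q * (\<Sum>s\<in>T'. d s * skew_mult q s p)" by simp
    qed
    also have "\<dots> = (\<lambda>p. \<Sum>i\<in>T \<times> T'. (c (fst i) * d (snd i)) * skew_mult (fst i) (snd i) p)"
      by (simp add: sum.cartesian_product split_beta sum_distrib_left mult.assoc)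
    also have "\<dots> \<in> lspan k (vprods S (Suc m))"
    proof (rule lspan_lincomb[OF k_subfield])
      show "finite (T \<times> T')" using T(1) T'(1) by simp
      fix i assume i: "i \<in> T \<times> T'"
      then have "skew_mult (fst i) (snd i) \<in> vprods S (Suc m)"
        using T(2) T'(2) by (force simp: set_prod_def)
      then show "(\<lambda>p. skew_mult (fst i) (snd i) p) \<in> lspan k (vprods S (Suc m))"
        using lspan_superset[OF k_subfield] by auto
      show "c (fst i) * d (snd i) \<in> k"
        using i T(3) T'(3) subfield_mult[OF k_subfield] by (auto simp: image_subset_iff)
    qed
    finally show "z \<in> kspan k (vprods S (Suc m))" by (simp add: kspan_eq_lspan)
  qed
qed

lemma kspan_vprods_kspan:
  assumes "finite S" "S \<subseteq> skew_carrier M"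
  shows "kspan k (vprods (kspan k S) m) = kspan k (vprods S m)"
proof
  show "kspan k (vprods (kspan k S) m) \<subseteq> kspan k (vprods S m)"
    unfolding kspan_eq_lspan
    by (rule lspan_subset_lspan[OF k_subfield vprods_lspan_subset[OF assms, unfolded kspan_eq_lspan]])
  have "S \<subseteq> kspan k S" using lspan_superset[OF k_subfield] by (simp add: kspan_eq_lspan)
  then show "kspan k (vprods S m) \<subseteq> kspan k (vprods (kspan k S) m)"
    unfolding kspan_eq_lspan by (intro lspan_mono vprods_mono)
qed

lemma kdim_vprods_pos:
  assumes S0: "finite S0" "S0 \<subseteq> skew_carrier M" and one: "skew_one \<in> kspan k S0"
  shows "1 \<le> kdim k (kspan k (vprods (kspan k S0) m))"
proof (rule kdim_pos[OF k_subfield finite_vprods[OF S0(1)] kspan_vprods_kspan[OF S0]])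
  show "skew_one \<in> kspan k (vprods (kspan k S0) m)"
    using vprods_one[OF one] lspan_superset[OF k_subfield] by (auto simp: kspan_eq_lspan)
  show "skew_one id \<noteq> 0" by (simp add: skew_one_def iota_def)
qed

lemma foldl_mult_kspan_vprods:
  assumes V: "V \<subseteq> skew_carrier M" "skew_one \<in> V" and x: "x \<in> kspan k (vprods V m)"
    and L: "set L \<subseteq> V" and len: "m + length L \<le> N"
  shows "foldl skew_mult x L \<in> kspan k (vprods V N)"
proof -
  obtain T c where T: "finite T" "T \<subseteq> vprods V m" "c ` T \<subseteq> k" "x = (\<lambda>p. \<Sum>q\<in>T. c q * q p)"
    using x unfolding kspan_eq_lspan lspan_def by blast
  have "foldl skew_mult x L = (\<lambda>p. \<Sum>q\<in>T. c q * foldl skew_mult q L p)"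
    unfolding T(4) using T(2) vprods_carrier[OF V(1)] L V(1)
    by (intro foldl_mult_lincomb[OF T(1)]) auto
  also have "\<dots> \<in> lspan k (vprods V N)"
  proof (rule lspan_lincomb[OF k_subfield T(1)])
    fix q assume "q \<in> T"
    then have "foldl skew_mult q L \<in> vprods V (m + length L)" using vprods_foldl T(2) L by blast
    then show "foldl skew_mult q L \<in> lspan k (vprods V N)"
      using vprods_pad[OF V _ len] lspan_superset[OF k_subfield] by blast
  qed (use T(3) in auto)
  finally show ?thesis by (simp add: kspan_eq_lspan)
qed

text \<open>The leading exponent separates the second factor; the scalars are then independent by
  assumption.\<close>

lemma foldl_mult_scalar:
  assumes b: "is_scalar b" and L: "set L \<subseteq> skew_carrier M"
  shows "foldl skew_mult b L = (\<lambda>p. b id * foldl skew_mult skew_one L p)"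
proof -
  obtain \<beta> where \<beta>: "b = iota \<beta>" using is_scalar_eq_iota[OF b] by blast
  then have b_eq: "b = (\<lambda>p. \<Sum>i\<in>{()}. \<beta> * skew_one p)" by (simp add: skew_one_def iota_def fun_eq_iff)
  have "foldl skew_mult (\<lambda>p. \<Sum>i\<in>{()}. \<beta> * skew_one p) L = (\<lambda>p. \<Sum>i\<in>{()}. \<beta> * foldl skew_mult skew_one L p)"
    using L skew_one_carrier by (intro foldl_mult_lincomb) auto
  then have "foldl skew_mult b L = (\<lambda>p. \<Sum>i\<in>{()}. \<beta> * foldl skew_mult skew_one L p)"
    using b_eq by metis
  moreover have "b id = \<beta>" using \<beta> by (simp add: iota_def)
  ultimately show ?thesis by simp
qed

lemma scalar_times_word_in_vprods:
  assumes V: "V \<subseteq> skew_carrier M" "skew_one \<in> V" and b: "is_scalar b" "b \<in> kspan k (vprods V m)"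
    and L: "set L \<subseteq> V" and len: "m + length L \<le> N"
  shows "(\<lambda>p. b id * foldl skew_mult skew_one L p) \<in> kspan k (vprods V N)"
proof -
  have "set L \<subseteq> skew_carrier M" using L V(1) by blast
  then show ?thesis using foldl_mult_kspan_vprods[OF V b(2) L len] foldl_mult_scalar[OF b(1)] by simp
qed

lemma lin_indep_scalar_times_leads:
  assumes B0: "finite B0" "\<And>b. b \<in> B0 \<Longrightarrow> is_scalar b" "lin_indep k B0 (\<lambda>b. b)"
    and A: "finite A" "\<And>a. a \<in> A \<Longrightarrow> is_lead (P a) (\<tau> a)" "inj_on \<tau> A"
  shows "lin_indep k (B0 \<times> A) (\<lambda>(b, a) p. b id * P a p)"
  unfolding lin_indep_def
proof (intro allI impI)
  fix c assume c: "(\<forall>z\<in>B0 \<times> A. c z \<in> k) \<and> (\<forall>p. (\<Sum>z\<in>B0 \<times> A. c z * (case z of (b, a) \<Rightarrow> \<lambda>p. b id * P a p) p) = 0)"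
  have rel: "\<forall>p. (\<Sum>a\<in>A. (\<Sum>b\<in>B0. c (b, a) * b id) * P a p) = 0"
  proof
    fix p
    have "(\<Sum>z\<in>B0 \<times> A. c z * (case z of (b, a) \<Rightarrow> \<lambda>p. b id * P a p) p)
        = (\<Sum>(b, a)\<in>B0 \<times> A. c (b, a) * (b id * P a p))"
      by (intro sum.cong refl) (simp add: split_beta)
    also have "\<dots> = (\<Sum>b\<in>B0. \<Sum>a\<in>A. c (b, a) * (b id * P a p))"
      by (rule sum.cartesian_product[symmetric])
    also have "\<dots> = (\<Sum>a\<in>A. \<Sum>b\<in>B0. c (b, a) * (b id * P a p))"
      by (rule sum.swap)
    also have "\<dots> = (\<Sum>a\<in>A. (\<Sum>b\<in>B0. c (b, a) * b id) * P a p)"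
      by (simp add: sum_distrib_right mult.assoc)
    finally show "(\<Sum>a\<in>A. (\<Sum>b\<in>B0. c (b, a) * b id) * P a p) = 0" using c by simp
  qed
  have d0: "\<forall>a\<in>A. (\<Sum>b\<in>B0. c (b, a) * b id) = 0"
  proof (rule distinct_leads_coeffs_zero)
    show "\<And>a. a \<in> A \<Longrightarrow> is_lead (P a) (\<tau> a)" by (rule A(2))
  qed (use A(1,3) rel in auto)
  show "\<forall>z\<in>B0 \<times> A. c z = 0"
  proof
    fix z assume "z \<in> B0 \<times> A"
    then obtain b a where ba: "z = (b, a)" "b \<in> B0" "a \<in> A" by blast
    have "\<forall>b\<in>B0. c (b, a) \<in> k" using c ba(3) by auto
    moreover have "\<forall>p. (\<Sum>b\<in>B0. c (b, a) * b p) = 0"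
    proof
      fix p show "(\<Sum>b\<in>B0. c (b, a) * b p) = 0"
      proof (cases "p = id")
        case True then show ?thesis using d0 ba(3) by simp
      next
        case False then show ?thesis using B0(2) by (auto simp: is_scalar_def intro!: sum.neutral)
      qed
    qed
    ultimately have "c (b, a) = 0"
      by (rule lin_indepD[OF B0(3) _ _ ba(2), where c = "\<lambda>b. c (b, a)"])
    then show "c z = 0" using ba(1) by simp
  qed
qed

end

definition power_word :: "(nat \<Rightarrow> 'a) \<Rightarrow> nat \<Rightarrow> (nat \<Rightarrow> nat) \<Rightarrow> 'a list" where
  "power_word u n a = concat (map (\<lambda>j. replicate (a j) (u j)) [0..<n])"

lemma length_power_word: "length (power_word u n a) = (\<Sum>j<n. a j)"
  unfolding power_word_def by (induction n) simp_all

lemma set_power_word: "set (power_word u n a) \<subseteq> u ` {..<n}"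
  by (auto simp: power_word_def)

lemma sum_list_map_power_word:
  "(\<Sum>v\<leftarrow>power_word u n a. f v) = (\<Sum>j<n. of_nat (a j) * f (u j))"
proof -
  have "(\<Sum>v\<leftarrow>power_word u n a. f v) = (\<Sum>j\<leftarrow>[0..<n]. of_nat (a j) * f (u j))"
    unfolding power_word_def by (induction n) (simp_all add: sum_list_replicate)
  then show ?thesis by (simp add: interv_sum_list_conv_sum_set_nat lessThan_atLeast0)
qed

lemma inj_on_nat_lincomb:
  fixes t :: "nat \<Rightarrow> nat \<Rightarrow> int"
  assumes ind: "\<forall>c::nat \<Rightarrow> int. (\<forall>i. (\<Sum>j<n. c j * t j i) = 0) \<longrightarrow> (\<forall>j<n. c j = 0)"
  shows "inj_on (\<lambda>a i. \<Sum>j<n. int (a j) * t j i) (PiE {..<n} X)"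
proof (rule inj_onI)
  fix a a' assume a: "a \<in> PiE {..<n} X" and a': "a' \<in> PiE {..<n} X"
    and eq: "(\<lambda>i. \<Sum>j<n. int (a j) * t j i) = (\<lambda>i. \<Sum>j<n. int (a' j) * t j i)"
  have "\<forall>i. (\<Sum>j<n. (int (a j) - int (a' j)) * t j i) = 0"
    using eq by (simp add: fun_eq_iff left_diff_distrib sum_subtractf)
  then have "\<forall>j<n. a j = a' j" using ind by fastforce
  then show "a = a'" using a a' by (metis PiE_ext lessThan_iff)
qed

context skew_Zn
begin

lemma is_lead_power_word:
  assumes u: "\<And>j. j < n \<Longrightarrow> u j \<in> skew_carrier M \<and> is_lead (u j) (t j)"
  shows "is_lead (foldl skew_mult skew_one (power_word u n a)) (\<lambda>i. \<Sum>j<n. int (a j) * t j i)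
    \<and> foldl skew_mult skew_one (power_word u n a) \<in> skew_carrier M"
proof -
  have lead_u: "lead (u j) = t j" if "j < n" for j
    using u[OF that] lead_eq by blast
  have "\<forall>v\<in>set (power_word u n a). v \<in> skew_carrier M \<and> is_lead v (lead v)"
  proof
    fix v assume "v \<in> set (power_word u n a)"
    then have "v \<in> u ` {..<n}" using set_power_word[of u n a] by blast
    then obtain j where "j < n" "v = u j" by blast
    then show "v \<in> skew_carrier M \<and> is_lead v (lead v)" using u lead_u by simp
  qed
  then have "is_lead (foldl skew_mult skew_one (power_word u n a)) (\<lambda>i. vzero i + (\<Sum>v\<leftarrow>power_word u n a. lead v i))
      \<and> foldl skew_mult skew_one (power_word u n a) \<in> skew_carrier M"
    by (rule is_lead_foldl[OF skew_one_carrier is_lead_one])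
  moreover have "(\<lambda>i. vzero i + (\<Sum>v\<leftarrow>power_word u n a. lead v i)) = (\<lambda>i. \<Sum>j<n. int (a j) * t j i)"
  proof
    fix i
    have "(\<Sum>v\<leftarrow>power_word u n a. lead v i) = (\<Sum>j<n. int (a j) * lead (u j) i)"
      by (rule sum_list_map_power_word)
    also have "\<dots> = (\<Sum>j<n. int (a j) * t j i)"
      using lead_u by (intro sum.cong) auto
    finally show "vzero i + (\<Sum>v\<leftarrow>power_word u n a. lead v i) = (\<Sum>j<n. int (a j) * t j i)"
      by (simp add: vzero_def)
  qed
  ultimately show ?thesis by simp
qed

lemma dim_growth:
  fixes S0 S :: "'L skew set" and u :: "nat \<Rightarrow> 'L skew" and t :: "nat \<Rightarrow> nat \<Rightarrow> int" and m :: nat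
  assumes S0: "finite S0" "\<And>x. x \<in> S0 \<Longrightarrow> is_scalar x" and one0: "skew_one \<in> kspan k S0"
    and S: "finite S" "S \<subseteq> skew_carrier M" "S0 \<subseteq> S"
    and u: "\<And>j. j < n \<Longrightarrow> u j \<in> S \<and> is_lead (u j) (t j)"
    and ind: "\<forall>c::nat \<Rightarrow> int. (\<forall>i. (\<Sum>j<n. c j * t j i) = 0) \<longrightarrow> (\<forall>j<n. c j = 0)"
  shows "(m + 1) ^ n * kdim k (kspan k (vprods (kspan k S0) m))
    \<le> kdim k (kspan k (vprods (kspan k S) ((n + 1) * m)))"
proof -
  define V where "V = kspan k S"
  have SV: "S \<subseteq> V" using lspan_superset[OF k_subfield] by (simp add: V_def kspan_eq_lspan)
  have V: "V \<subseteq> skew_carrier M" "skew_one \<in> V"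
    using lspan_carrier[OF S(2)] one0 lspan_mono[OF S(3)] by (auto simp: V_def kspan_eq_lspan)
  have S0V: "kspan k S0 \<subseteq> V" unfolding V_def kspan_eq_lspan by (rule lspan_mono[OF S(3)])
  have S0c: "S0 \<subseteq> skew_carrier M" using S0(2) is_scalar_carrier by blast
  define W0 where "W0 = kspan k (vprods (kspan k S0) m)"
  have W0: "W0 = kspan k (vprods S0 m)" unfolding W0_def by (rule kspan_vprods_kspan[OF S0(1) S0c])
  obtain B0 where B0: "finite B0" "card B0 = kdim k W0" "kspan k B0 = W0" "B0 \<subseteq> W0" "lin_indep k B0 (\<lambda>b. b)"
    by (rule kdim_basis[OF k_subfield finite_vprods[OF S0(1)] W0])
  have B0_scalar: "is_scalar b" if "b \<in> B0" for b
    using that B0(4) is_scalar_lspan[OF is_scalar_vprods[OF S0(2)]] by (auto simp: W0 kspan_eq_lspan)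
  define A where "A = PiE {..<n} (\<lambda>_. {..m})"
  have A: "finite A" by (simp add: A_def finite_PiE)
  define P where "P a = foldl skew_mult skew_one (power_word u n a)" for a
  define \<tau> where "\<tau> a = (\<lambda>i. \<Sum>j<n. int (a j) * t j i)" for a
  have P: "is_lead (P a) (\<tau> a) \<and> P a \<in> skew_carrier M" for a
    unfolding P_def \<tau>_def using u S(2) by (intro is_lead_power_word) auto
  have "inj_on \<tau> A" unfolding \<tau>_def A_def by (rule inj_on_nat_lincomb[OF ind])
  then have indep: "lin_indep k (B0 \<times> A) (\<lambda>(b, a) p. b id * P a p)"
    using lin_indep_scalar_times_leads[OF B0(1) B0_scalar B0(5) A] P by blast
  have word_V: "set (power_word u n a) \<subseteq> V" for a
    using set_power_word[of u n a] u SV by fastforce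
  have W0_V: "W0 \<subseteq> kspan k (vprods V m)"
    unfolding W0_def kspan_eq_lspan using S0V[unfolded kspan_eq_lspan] by (intro lspan_mono vprods_mono)
  have "(\<lambda>p. b id * P a p) \<in> kspan k (vprods V ((n + 1) * m))" if b: "b \<in> B0" and a: "a \<in> A" for b a
  proof -
    have "(\<Sum>j<n. a j) \<le> (\<Sum>j<n. m)"
      using a by (intro sum_mono) (auto simp: A_def)
    then have "m + length (power_word u n a) \<le> (n + 1) * m"
      by (simp add: length_power_word)
    then show ?thesis unfolding P_def
      using scalar_times_word_in_vprods[OF V B0_scalar[OF b] _ word_V] b B0(4) W0_V by blast
  qed
  then have "card (B0 \<times> A) \<le> kdim k (kspan k (vprods V ((n + 1) * m)))"
    using card_le_kdim[OF k_subfield finite_vprods[OF S(1)] kspan_vprods_kspan[OF S(1,2)] _ _ indep]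
      B0(1) A by (auto simp: V_def)
  moreover have "card (B0 \<times> A) = kdim k W0 * (m + 1) ^ n"
    using B0(2) by (simp add: card_cartesian_product A_def card_PiE)
  ultimately show ?thesis by (simp add: V_def W0_def mult.commute)
qed

end

section \<open>From dimension growth to Gelfand--Kirillov exponents\<close>

lemma ln_ratio_tendsto_1:
  "((\<lambda>m::nat. ln (real m) / ln (real ((n + 1) * m))) \<longlongrightarrow> 1) sequentially"
proof -
  have lim: "((\<lambda>m::nat. ln (real m) / (ln (real n + 1) + ln (real m))) \<longlongrightarrow> 1) sequentially"
    by real_asymp
  have "\<forall>\<^sub>F m in sequentially. ln (real m) / (ln (real n + 1) + ln (real m)) = ln (real m) / ln (real ((n + 1) * m))"
  proof (rule eventually_sequentiallyI[of 1])
    fix m :: nat assume "1 \<le> m"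
    have "ln (real ((n + 1) * m)) = ln (real n + 1) + ln (real m)"
      using ln_mult_pos[of "real n + 1" "real m"] \<open>1 \<le> m\<close> by (simp add: algebra_simps)
    then show "ln (real m) / (ln (real n + 1) + ln (real m)) = ln (real m) / ln (real ((n + 1) * m))"
      by simp
  qed
  then show ?thesis by (rule Lim_transform_eventually[OF lim])
qed

lemma limsup_growth:
  fixes a b :: "nat \<Rightarrow> nat" and n :: nat
  assumes a_pos: "\<And>m. 1 \<le> a m" and ab: "\<And>m. (m + 1) ^ n * a m \<le> b ((n + 1) * m)"
  shows "limsup (\<lambda>m. ereal (ln (real (a m)) / ln (real m))) + ereal (real n)
     \<le> limsup (\<lambda>N. ereal (ln (real (b N)) / ln (real N)))"
proof -
  define f where "f m = ln (real (a m)) / ln (real m)" for m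
  define g where "g N = ln (real (b N)) / ln (real N)" for N
  define r where "r m = ln (real m) / ln (real ((n + 1) * m))" for m
  have bound: "r m * (real n + f m) \<le> g ((n + 1) * m)" if m: "2 \<le> m" for m
  proof -
    have "real m ^ n \<le> real (m + 1) ^ n" by (intro power_mono) auto
    then have "real m ^ n * real (a m) \<le> real (m + 1) ^ n * real (a m)" by (intro mult_right_mono) auto
    also have "\<dots> = real ((m + 1) ^ n * a m)" by simp
    also have "\<dots> \<le> real (b ((n + 1) * m))" using ab[of m] by linarith
    finally have "ln (real m ^ n * real (a m)) \<le> ln (real (b ((n + 1) * m)))"
      using m a_pos[of m] by (intro ln_mono) auto
    then have "real n * ln (real m) + ln (real (a m)) \<le> ln (real (b ((n + 1) * m)))"
      using m a_pos[of m] by (simp add: ln_mult ln_realpow)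
    moreover have "(1::nat) < (n + 1) * m" using m by (simp add: distrib_right)
    then have "0 < ln (real ((n + 1) * m))" by (intro ln_gt_zero) linarith
    moreover have "0 < ln (real m)" using m by simp
    then have "r m * (real n + f m) = (real n * ln (real m) + ln (real (a m))) / ln (real ((n + 1) * m))"
      by (cases "ln (real ((n + 1) * m)) = 0") (simp_all add: r_def f_def field_simps)
    ultimately show ?thesis by (simp add: g_def divide_right_mono)
  qed
  have r_lim: "(\<lambda>m. ereal (r m)) \<longlonglongrightarrow> 1"
    using tendsto_ereal[OF ln_ratio_tendsto_1[of n]] by (simp add: r_def one_ereal_def)
  have "limsup (\<lambda>m. ereal (f m)) + ereal (real n) = limsup (\<lambda>m. ereal (real n) + ereal (f m))"
    using Limsup_add_ereal_left[of sequentially "ereal (real n)" "\<lambda>m. ereal (f m)"] by (simp add: add.commute)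
  also have "\<dots> = limsup (\<lambda>m. ereal (r m) * (ereal (real n) + ereal (f m)))"
    using ereal_limsup_lim_mult[OF r_lim, of "\<lambda>m. ereal (real n) + ereal (f m)"] by simp
  also have "\<dots> \<le> limsup (\<lambda>m. ereal (g ((n + 1) * m)))"
    using bound by (intro Limsup_mono) (auto simp: eventually_sequentially intro!: exI[of _ 2])
  also have "\<dots> \<le> limsup (\<lambda>N. ereal (g N))"
  proof -
    have "strict_mono (\<lambda>m::nat. (n + 1) * m)" by (intro strict_monoI mult_less_mono2) auto
    then show ?thesis using limsup_subseq_mono[of _ "\<lambda>N. ereal (g N)"] by (simp add: comp_def)
  qed
  finally show ?thesis by (simp add: f_def g_def)
qed

section \<open>Integer linear algebra\<close>

lemma poly_altdef_lessThan:
  fixes q :: "int poly"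
  assumes "degree q < n"
  shows "poly q x = (\<Sum>i<n. coeff q i * x ^ i)"
proof -
  have "poly q x = (\<Sum>i\<le>degree q. coeff q i * x ^ i)" by (rule poly_altdef)
  also have "\<dots> = (\<Sum>i<n. coeff q i * x ^ i)"
    using assms by (intro sum.mono_neutral_left) (auto simp: coeff_eq_0)
  finally show ?thesis .
qed

text \<open>Pair the relation with the polynomial vanishing at all nodes but \<open>N j\<^sub>0\<close>.\<close>

lemma vandermonde_indep:
  fixes N :: "nat \<Rightarrow> nat" and c :: "nat \<Rightarrow> int"
  assumes inj: "inj_on N {..<n}" and rel: "\<forall>i<n. (\<Sum>j<n. c j * int (N j) ^ i) = 0"
  shows "\<forall>j<n. c j = 0"
proof (intro allI impI)
  fix j0 assume j0: "j0 < n"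
  define q where "q = (\<Prod>j\<in>{..<n} - {j0}. [:- int (N j), 1:])"
  have "degree q \<le> card ({..<n} - {j0})"
    unfolding q_def using degree_prod_sum_le[of "{..<n} - {j0}" "\<lambda>j. [:- int (N j), 1:]"] by simp
  also have "\<dots> < n" using j0 by simp
  finally have dq: "degree q < n" .
  have "(\<Sum>j<n. c j * poly q (int (N j))) = (\<Sum>j<n. \<Sum>i<n. coeff q i * (c j * int (N j) ^ i))"
    by (simp add: poly_altdef_lessThan[OF dq] sum_distrib_left mult.left_commute)
  also have "\<dots> = (\<Sum>i<n. \<Sum>j<n. coeff q i * (c j * int (N j) ^ i))"
    by (rule sum.swap)
  also have "\<dots> = (\<Sum>i<n. coeff q i * (\<Sum>j<n. c j * int (N j) ^ i))"
    by (simp add: sum_distrib_left)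
  also have "\<dots> = 0" using rel by simp
  finally have s: "(\<Sum>j<n. c j * poly q (int (N j))) = 0" .
  have "poly q (int (N j)) = 0" if "j < n" "j \<noteq> j0" for j
    using that unfolding q_def poly_prod by (intro prod_zero) (auto intro!: bexI[of _ j])
  then have "(\<Sum>j<n. c j * poly q (int (N j))) = c j0 * poly q (int (N j0))"
    using j0 by (subst sum.remove[of _ j0]) (auto intro!: sum.neutral)
  moreover have "poly q (int (N j0)) \<noteq> 0"
    using inj j0 unfolding q_def poly_prod by (auto simp: prod_zero_iff dest: inj_onD)
  ultimately show "c j0 = 0" using s by simp
qed

definition moment_vec :: "nat \<Rightarrow> nat \<Rightarrow> nat \<Rightarrow> int" where
  "moment_vec n N = (\<lambda>i. if i < n then int N ^ i else 0)"

lemma moment_vec_Zn: "moment_vec n N \<in> Zn n"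
  by (simp add: moment_vec_def Zn_def)

lemma moment_vec_indep:
  assumes inj: "inj_on e {..<n}" and rel: "\<forall>i. (\<Sum>j<n. c j * moment_vec n (e j) i) = 0"
  shows "\<forall>j<n. c j = 0"
proof (rule vandermonde_indep[OF inj], intro allI impI)
  fix i assume "i < n"
  then show "(\<Sum>j<n. c j * int (e j) ^ i) = 0" using rel[rule_format, of i] by (simp add: moment_vec_def)
qed

lemma pigeonhole_inj_fiber:
  assumes G: "finite G" and f: "\<forall>x. f x \<in> G"
  shows "\<exists>g\<in>G. \<exists>e::nat \<Rightarrow> nat. inj_on e {..<n} \<and> (\<forall>j<n. f (e j) = g)"
proof -
  have "\<exists>g\<in>G. infinite (f -` {g})"
  proof (rule ccontr)
    assume "\<not> (\<exists>g\<in>G. infinite (f -` {g}))"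
    then have "finite (\<Union>g\<in>G. f -` {g})" using G by auto
    moreover have "(\<Union>g\<in>G. f -` {g}) = UNIV" using f by auto
    ultimately show False by simp
  qed
  then obtain g where g: "g \<in> G" "infinite (f -` {g})" by blast
  then obtain F where F: "finite F" "card F = n" "F \<subseteq> f -` {g}"
    using infinite_arbitrarily_large by blast
  then obtain e where e: "bij_betw e {..<n} F"
    using ex_bij_betw_nat_finite[OF F(1)] by (auto simp: atLeast0LessThan)
  show ?thesis
    using g(1) e F(3) by (intro bexI[of _ g] exI[of _ e]) (auto simp: bij_betw_def)
qed

lemma Zn_lincomb: "(\<And>j. j \<in> J \<Longrightarrow> v j \<in> Zn n) \<Longrightarrow> (\<lambda>i. \<Sum>j\<in>J. c j * v j i) \<in> Zn n"
  by (auto simp: Zn_def intro!: sum.neutral)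

locale Zn_hom =
  fixes n :: nat and f :: "(nat \<Rightarrow> int) \<Rightarrow> (nat \<Rightarrow> int)"
  assumes map_vadd: "a \<in> Zn n \<Longrightarrow> b \<in> Zn n \<Longrightarrow> f (vadd a b) = vadd (f a) (f b)"
begin

lemma map_vzero: "f vzero = vzero"
proof -
  have "f vzero = vadd (f vzero) (f vzero)" using map_vadd[OF Zn_vzero Zn_vzero] by (simp add: vadd_def vzero_def)
  then show ?thesis by (auto simp: vadd_def vzero_def fun_eq_iff)
qed

lemma map_scale_nat:
  assumes a: "a \<in> Zn n"
  shows "f (\<lambda>i. int c * a i) = (\<lambda>i. int c * f a i)"
proof (induction c)
  case 0 then show ?case using map_vzero by (simp add: vzero_def)
next
  case (Suc c)
  have "f (\<lambda>i. int (Suc c) * a i) = f (vadd (\<lambda>i. int c * a i) a)"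
    by (simp add: vadd_def algebra_simps)
  also have "\<dots> = vadd (f (\<lambda>i. int c * a i)) (f a)"
    using a by (intro map_vadd) (auto simp: Zn_def)
  finally show ?case by (simp add: Suc.IH vadd_def algebra_simps)
qed

lemma map_uminus:
  assumes a: "a \<in> Zn n"
  shows "f (\<lambda>i. - a i) = (\<lambda>i. - f a i)"
proof -
  have "vadd (f a) (f (\<lambda>i. - a i)) = f (vadd a (\<lambda>i. - a i))"
    using a by (intro map_vadd[symmetric]) (auto simp: Zn_def)
  also have "vadd a (\<lambda>i. - a i) = vzero" by (simp add: vadd_def vzero_def)
  finally show ?thesis using map_vzero by (auto simp: vadd_def vzero_def fun_eq_iff eq_neg_iff_add_eq_0 add.commute)
qed

lemma map_scale:
  assumes a: "a \<in> Zn n"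
  shows "f (\<lambda>i. c * a i) = (\<lambda>i. c * f a i)"
proof (cases "0 \<le> c")
  case True
  then show ?thesis using map_scale_nat[OF a, of "nat c"] by simp
next
  case False
  then have c: "c = - int (nat (- c))" by simp
  have "(\<lambda>i. int (nat (- c)) * a i) \<in> Zn n" using a by (simp add: Zn_def)
  then show ?thesis
    using map_uminus[of "\<lambda>i. int (nat (- c)) * a i"] map_scale_nat[OF a, of "nat (- c)"]
    by (subst (1 2) c) simp
qed

lemma map_lincomb:
  assumes "finite J" "\<And>j. j \<in> J \<Longrightarrow> v j \<in> Zn n"
  shows "f (\<lambda>i. \<Sum>j\<in>J. c j * v j i) = (\<lambda>i. \<Sum>j\<in>J. c j * f (v j) i)"
  using assms
proof (induction J rule: finite_induct)
  case empty
  then show ?case using map_vzero by (simp add: vzero_def)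
next
  case (insert j J)
  have Z: "(\<lambda>i. c j * v j i) \<in> Zn n" "(\<lambda>i. \<Sum>j\<in>J. c j * v j i) \<in> Zn n"
    using insert.prems by (auto simp: Zn_def intro!: Zn_lincomb)
  have "f (\<lambda>i. \<Sum>j\<in>insert j J. c j * v j i) = f (vadd (\<lambda>i. c j * v j i) (\<lambda>i. \<Sum>j\<in>J. c j * v j i))"
    using insert.hyps by (simp add: vadd_def)
  also have "\<dots> = vadd (f (\<lambda>i. c j * v j i)) (f (\<lambda>i. \<Sum>j\<in>J. c j * v j i))"
    by (rule map_vadd[OF Z])
  also have "\<dots> = (\<lambda>i. \<Sum>j\<in>insert j J. c j * f (v j) i)"
    using insert map_scale[of "v j" "c j"] by (simp add: vadd_def)
  finally show ?case .
qed

lemma lincomb_eq_zero_reflect: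
  assumes inj: "inj_on f (Zn n)" and J: "finite J" "\<And>j. j \<in> J \<Longrightarrow> v j \<in> Zn n"
    and rel: "\<forall>i. (\<Sum>j\<in>J. c j * f (v j) i) = 0"
  shows "\<forall>i. (\<Sum>j\<in>J. c j * v j i) = 0"
proof -
  have "f (\<lambda>i. \<Sum>j\<in>J. c j * v j i) = f vzero"
    using map_lincomb[OF J] rel map_vzero by (simp add: vzero_def fun_eq_iff)
  then have "(\<lambda>i. \<Sum>j\<in>J. c j * v j i) = vzero"
    by (rule inj_onD[OF inj _ Zn_lincomb[OF J(2)] Zn_vzero])
  then show ?thesis by (simp add: vzero_def fun_eq_iff)
qed

end

section \<open>Galois algebras\<close>

lemma subring_prod: "is_subring R \<Longrightarrow> (\<And>i. i \<in> I \<Longrightarrow> f i \<in> R) \<Longrightarrow> prod f I \<in> R"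
  by (induction I rule: infinite_finite_induct) (auto simp: is_subring_def)

lemma ring_gen_subring: "is_subring (ring_gen A)"
  unfolding ring_gen_def is_subring_def by auto

lemma skew_ring_gen_subring: "skew_subring (skew_ring_gen A)"
  unfolding skew_ring_gen_def skew_subring_def by auto

lemma skew_subring_sum:
  assumes R: "skew_subring R" and T: "finite T" and f: "\<And>t. t \<in> T \<Longrightarrow> f t \<in> R"
  shows "skew_sum f T \<in> R"
  using T f
proof (induction T rule: finite_induct)
  case empty
  have "skew_sum f {} = skew_zero" by (simp add: skew_sum_def skew_zero_def)
  then show ?case using R by (simp add: skew_subring_def)
next
  case (insert x T)
  have "skew_sum f (insert x T) = skew_add (f x) (skew_sum f T)"
    using insert by (simp add: skew_sum_def skew_add_def)
  then show ?case using R insert by (simp add: skew_subring_def)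
qed

locale galois_algebra = skew_Zn k M n \<phi> for k :: "'L::field set" and M n \<phi> +
  fixes \<Gamma> :: "'L set" and G :: "('L \<Rightarrow> 'L) set" and U :: "'L skew set"
  assumes Gamma_subring: "is_subring \<Gamma>"
    and G_def: "G = Aut_over (frac_field \<Gamma>)"
    and G_finite: "finite G"
    and G_conj: "\<forall>g\<in>G. \<forall>m\<in>M. g \<circ> m \<circ> inv g \<in> M"
    and U_subring: "skew_subring U"
    and U_Gamma: "iota ` \<Gamma> \<subseteq> U"
    and U_invariants: "U \<subseteq> skew_invariants M G"
    and KU: "left_span (frac_field \<Gamma>) U = skew_invariants M G"
begin

lemma G_aut: "g \<in> G \<Longrightarrow> field_aut g"
  by (simp add: G_def Aut_over_def)

lemma G_bij: "g \<in> G \<Longrightarrow> bij g"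
  using G_aut aut_bij by blast

lemma G_inv_comp: "g \<in> G \<Longrightarrow> inv g \<circ> g = id"
  using G_bij bij_is_inj inv_o_cancel by blast

lemma G_comp_inv: "g \<in> G \<Longrightarrow> g \<circ> inv g = id"
  using G_bij by (auto simp: fun_eq_iff bij_is_surj surj_f_inv_f)

lemma U_carrier: "U \<subseteq> skew_carrier M"
  using U_invariants by (auto simp: skew_invariants_def)

definition conj_orbit :: "('L \<Rightarrow> 'L) \<Rightarrow> ('L \<Rightarrow> 'L) set" where
  "conj_orbit m = (\<lambda>g. g \<circ> m \<circ> inv g) ` G"

definition orbit_sum :: "('L \<Rightarrow> 'L) \<Rightarrow> 'L skew" where
  "orbit_sum m = (\<lambda>p. if p \<in> conj_orbit m then 1 else 0)"

lemma G_id: "id \<in> G"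
  by (simp add: G_def id_Aut_over)

lemma G_comp: "g \<in> G \<Longrightarrow> h \<in> G \<Longrightarrow> g \<circ> h \<in> G"
  by (simp add: G_def Aut_over_comp)

lemma G_inv: "g \<in> G \<Longrightarrow> inv g \<in> G"
  by (simp add: G_def Aut_over_inv)

lemma conj_orbit_self: "m \<in> conj_orbit m"
  unfolding conj_orbit_def using G_id by (auto intro!: image_eqI[of _ _ id])

lemma conj_orbit_conj:
  assumes h: "h \<in> G"
  shows "inv h \<circ> p \<circ> h \<in> conj_orbit m \<longleftrightarrow> p \<in> conj_orbit m"
proof
  assume "inv h \<circ> p \<circ> h \<in> conj_orbit m"
  then obtain g where g: "g \<in> G" "inv h \<circ> p \<circ> h = g \<circ> m \<circ> inv g" by (auto simp: conj_orbit_def)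
  have "h \<circ> (inv h \<circ> p \<circ> h) \<circ> inv h = (h \<circ> inv h) \<circ> p \<circ> (h \<circ> inv h)" by (simp only: comp_assoc)
  then have "p = h \<circ> (inv h \<circ> p \<circ> h) \<circ> inv h" using G_comp_inv[OF h] by simp
  also have "\<dots> = (h \<circ> g) \<circ> m \<circ> inv (h \<circ> g)"
    using g(2) o_inv_distrib[OF G_bij[OF h] G_bij[OF g(1)]] by (simp add: comp_assoc)
  finally show "p \<in> conj_orbit m"
    using G_comp[OF h g(1)] by (auto simp: conj_orbit_def)
next
  assume "p \<in> conj_orbit m"
  then obtain g where g: "g \<in> G" "p = g \<circ> m \<circ> inv g" by (auto simp: conj_orbit_def)
  have ih: "inv h \<in> G" using G_inv[OF h] .
  have "inv h \<circ> p \<circ> h = (inv h \<circ> g) \<circ> m \<circ> inv (inv h \<circ> g)"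
    using g(2) o_inv_distrib[OF G_bij[OF ih] G_bij[OF g(1)]] inv_inv_eq[OF G_bij[OF h]]
    by (simp add: comp_assoc)
  then show "inv h \<circ> p \<circ> h \<in> conj_orbit m"
    using G_comp[OF ih g(1)] by (auto simp: conj_orbit_def)
qed

lemma orbit_sum_invariant:
  assumes m: "m \<in> M"
  shows "orbit_sum m \<in> skew_invariants M G"
proof -
  have "ssupp (orbit_sum m) = conj_orbit m" by (auto simp: ssupp_def orbit_sum_def)
  moreover have "conj_orbit m \<subseteq> M" using G_conj m by (auto simp: conj_orbit_def)
  moreover have "finite (conj_orbit m)" using G_finite by (simp add: conj_orbit_def)
  ultimately have "orbit_sum m \<in> skew_carrier M" by (simp add: skew_carrier_def)
  moreover have "skew_act h (orbit_sum m) = orbit_sum m" if h: "h \<in> G" for h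
    using conj_orbit_conj[OF h] aut_0[OF G_aut[OF h]] aut_1[OF G_aut[OF h]]
    by (auto simp: skew_act_def orbit_sum_def fun_eq_iff)
  ultimately show ?thesis by (simp add: skew_invariants_def)
qed

lemma clear_denominators:
  assumes x: "x \<in> left_span (frac_field \<Gamma>) U"
  shows "\<exists>b\<in>\<Gamma>. b \<noteq> 0 \<and> (\<lambda>p. b * x p) \<in> U"
proof -
  obtain T c where T: "finite T" "T \<subseteq> U" "c ` T \<subseteq> frac_field \<Gamma>"
    and xe: "x = skew_sum (\<lambda>u. skew_mult (iota (c u)) u) T"
    using x unfolding left_span_def by blast
  have "\<forall>u\<in>T. \<exists>ad. fst ad \<in> \<Gamma> \<and> snd ad \<in> \<Gamma> \<and> snd ad \<noteq> 0 \<and> c u = fst ad / snd ad"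
    using T(3) unfolding frac_field_def by force
  from bchoice[OF this] obtain AD where AD: "\<forall>u\<in>T. fst (AD u) \<in> \<Gamma> \<and> snd (AD u) \<in> \<Gamma> \<and> snd (AD u) \<noteq> 0 \<and> c u = fst (AD u) / snd (AD u)"
    by blast
  define b where "b = (\<Prod>u\<in>T. snd (AD u))"
  have b: "b \<in> \<Gamma>" "b \<noteq> 0" unfolding b_def using AD T(1) by (auto intro!: subring_prod[OF Gamma_subring])
  have bc: "b * c u \<in> \<Gamma>" if u: "u \<in> T" for u
  proof -
    have "b * c u = fst (AD u) * (\<Prod>u'\<in>T - {u}. snd (AD u'))"
      using AD u T(1) by (simp add: b_def prod.remove field_simps)
    moreover have "(\<Prod>u'\<in>T - {u}. snd (AD u')) \<in> \<Gamma>" using AD by (intro subring_prod[OF Gamma_subring]) auto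
    ultimately show ?thesis using AD u Gamma_subring by (simp add: is_subring_def)
  qed
  have "(\<lambda>p. b * x p) = skew_sum (\<lambda>u. skew_mult (iota (b * c u)) u) T"
    unfolding xe by (simp add: skew_sum_def skew_mult_iota_left sum_distrib_left mult.assoc)
  also have "\<dots> \<in> U"
  proof (rule skew_subring_sum[OF U_subring T(1)])
    fix u assume "u \<in> T"
    then have "iota (b * c u) \<in> U" "u \<in> U" using U_Gamma bc T(2) by auto
    then show "skew_mult (iota (b * c u)) u \<in> U" using U_subring by (simp add: skew_subring_def)
  qed
  finally show ?thesis using b by blast
qed

text \<open>Conjugation by \<open>g \<in> G\<close> permutes \<open>M\<close>, so transported along \<open>\<phi>\<close> it acts on exponent vectors.\<close>

definition conj_exp :: "('L \<Rightarrow> 'L) \<Rightarrow> (nat \<Rightarrow> int) \<Rightarrow> (nat \<Rightarrow> int)" where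
  "conj_exp g a = inv_into (Zn n) \<phi> (g \<circ> \<phi> a \<circ> inv g)"

lemma conj_exp:
  assumes g: "g \<in> G" and a: "a \<in> Zn n"
  shows "conj_exp g a \<in> Zn n" "\<phi> (conj_exp g a) = g \<circ> \<phi> a \<circ> inv g"
proof -
  have mem: "g \<circ> \<phi> a \<circ> inv g \<in> \<phi> ` Zn n" using G_conj g \<phi>_in_M[OF a] \<phi>_image by auto
  show "conj_exp g a \<in> Zn n" unfolding conj_exp_def by (rule inv_into_into[OF mem])
  show "\<phi> (conj_exp g a) = g \<circ> \<phi> a \<circ> inv g" unfolding conj_exp_def by (rule f_inv_into_f[OF mem])
qed

lemma conj_exp_unique:
  "g \<in> G \<Longrightarrow> a \<in> Zn n \<Longrightarrow> s \<in> Zn n \<Longrightarrow> \<phi> s = g \<circ> \<phi> a \<circ> inv g \<Longrightarrow> s = conj_exp g a"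
  using conj_exp[of g a] inj_onD[OF \<phi>_inj, of s "conj_exp g a"] by auto

lemma conj_exp_vadd:
  assumes g: "g \<in> G" and a: "a \<in> Zn n" and b: "b \<in> Zn n"
  shows "conj_exp g (vadd a b) = vadd (conj_exp g a) (conj_exp g b)"
proof -
  have "\<phi> (vadd (conj_exp g a) (conj_exp g b)) = (g \<circ> \<phi> a \<circ> inv g) \<circ> (g \<circ> \<phi> b \<circ> inv g)"
    using \<phi>_vadd conj_exp[OF g a] conj_exp[OF g b] by simp
  also have "\<dots> = g \<circ> (\<phi> a \<circ> (inv g \<circ> g) \<circ> \<phi> b) \<circ> inv g" by (simp add: comp_assoc)
  also have "\<dots> = g \<circ> \<phi> (vadd a b) \<circ> inv g" using G_inv_comp[OF g] \<phi>_vadd[OF a b] by simp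
  finally show ?thesis
    using conj_exp_unique[OF g Zn_vadd[OF a b]] Zn_vadd conj_exp[OF g a] conj_exp[OF g b] by metis
qed

lemma conj_exp_inj:
  assumes g: "g \<in> G"
  shows "inj_on (conj_exp g) (Zn n)"
proof (rule inj_onI)
  fix a b assume a: "a \<in> Zn n" and b: "b \<in> Zn n" and eq: "conj_exp g a = conj_exp g b"
  have cancel: "inv g \<circ> (g \<circ> \<phi> x \<circ> inv g) \<circ> g = \<phi> x" for x
  proof -
    have "inv g \<circ> (g \<circ> \<phi> x \<circ> inv g) \<circ> g = (inv g \<circ> g) \<circ> \<phi> x \<circ> (inv g \<circ> g)" by (simp only: comp_assoc)
    then show ?thesis using G_inv_comp[OF g] by simp
  qed
  have "\<phi> a = inv g \<circ> (g \<circ> \<phi> a \<circ> inv g) \<circ> g" by (rule cancel[symmetric])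
  also have "\<dots> = inv g \<circ> (g \<circ> \<phi> b \<circ> inv g) \<circ> g" using conj_exp[OF g a] conj_exp[OF g b] eq by metis
  also have "\<dots> = \<phi> b" by (rule cancel)
  finally show "a = b" using \<phi>_inj a b by (auto dest: inj_onD)
qed

lemma exists_U_lead_conj:
  assumes w: "w \<in> Zn n"
  shows "\<exists>y g. y \<in> U \<and> g \<in> G \<and> is_lead y (conj_exp g w)"
proof -
  obtain b where b: "b \<in> \<Gamma>" "b \<noteq> 0" and yU: "(\<lambda>p. b * orbit_sum (\<phi> w) p) \<in> U"
    using clear_denominators orbit_sum_invariant[OF \<phi>_in_M[OF w]] KU by blast
  define y where "y = (\<lambda>p. b * orbit_sum (\<phi> w) p)"
  have "y (\<phi> w) \<noteq> 0" using b conj_orbit_self by (simp add: y_def orbit_sum_def)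
  moreover have "y \<in> skew_carrier M" using yU U_carrier by (auto simp: y_def)
  ultimately obtain s where s: "is_lead y s" using is_lead_exists by blast
  then have "y (\<phi> s) \<noteq> 0" "s \<in> Zn n" by (auto simp: is_lead_def)
  then have "\<phi> s \<in> conj_orbit (\<phi> w)" by (simp add: y_def orbit_sum_def split: if_splits)
  then obtain g where g: "g \<in> G" "\<phi> s = g \<circ> \<phi> w \<circ> inv g" by (auto simp: conj_orbit_def)
  then have "s = conj_exp g w" using conj_exp_unique w \<open>s \<in> Zn n\<close> by blast
  then show ?thesis using yU s g(1) unfolding y_def by blast
qed

lemma exists_indep_leads:
  "\<exists>u t. (\<forall>j<n. u j \<in> U \<and> is_lead (u j) (t j)) \<and>
     (\<forall>c::nat \<Rightarrow> int. (\<forall>i. (\<Sum>j<n. c j * t j i) = 0) \<longrightarrow> (\<forall>j<n. c j = 0))"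
proof -
  have "\<forall>N. \<exists>y g. y \<in> U \<and> g \<in> G \<and> is_lead y (conj_exp g (moment_vec n N))"
    using exists_U_lead_conj[OF moment_vec_Zn] by blast
  from choice[OF this] obtain Y where "\<forall>N. \<exists>g. Y N \<in> U \<and> g \<in> G \<and> is_lead (Y N) (conj_exp g (moment_vec n N))"
    by blast
  from choice[OF this] obtain gg where Y: "\<forall>N. Y N \<in> U \<and> gg N \<in> G \<and> is_lead (Y N) (conj_exp (gg N) (moment_vec n N))"
    by blast
  obtain g e where g: "g \<in> G" and e: "inj_on e {..<n}" "\<forall>j<n. gg (e j) = g"
    using pigeonhole_inj_fiber[OF G_finite, of gg] Y by blast
  define t where "t j = conj_exp g (moment_vec n (e j))" for j
  have "\<forall>j<n. c j = 0" if c: "\<forall>i. (\<Sum>j<n. c j * t j i) = 0" for c :: "nat \<Rightarrow> int"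
  proof -
    interpret Zn_hom n "conj_exp g" by unfold_locales (rule conj_exp_vadd[OF g])
    have "\<forall>i. (\<Sum>j<n. c j * moment_vec n (e j) i) = 0"
      using lincomb_eq_zero_reflect[OF conj_exp_inj[OF g], of "{..<n}" "\<lambda>j. moment_vec n (e j)" c]
        c moment_vec_Zn by (simp add: t_def)
    then show ?thesis using moment_vec_indep[OF e(1)] by blast
  qed
  then show ?thesis using Y e(2) by (intro exI[of _ "\<lambda>j. Y (e j)"] exI[of _ t]) (auto simp: t_def)
qed

end

section \<open>Gelfand--Kirillov dimension\<close>

definition gk_frames :: "'a::field set \<Rightarrow> 'a skew set \<Rightarrow> 'a skew set set" where
  "gk_frames k A = {V. (\<exists>S. finite S \<and> S \<subseteq> A \<and> V = kspan k S) \<and> skew_one \<in> V}"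

definition gk_rate :: "'a::field set \<Rightarrow> 'a skew set \<Rightarrow> ereal" where
  "gk_rate k V = limsup (\<lambda>m. ereal (ln (real (kdim k (kspan k (vprods V m)))) / ln (real m)))"

lemma GKdim_eq_SUP: "GKdim k A = (SUP V\<in>gk_frames k A. gk_rate k V)"
  by (simp add: GKdim_def gk_frames_def gk_rate_def)

lemma GKdim_add_le:
  assumes "\<And>V0. V0 \<in> gk_frames k A \<Longrightarrow> \<exists>V\<in>gk_frames k B. gk_rate k V0 + ereal c \<le> gk_rate k V"
  shows "GKdim k A + ereal c \<le> GKdim k B"
proof (cases "gk_frames k A = {}")
  case True
  then show ?thesis by (simp add: GKdim_eq_SUP bot_ereal_def)
next
  case False
  have "GKdim k A + ereal c = (SUP V0\<in>gk_frames k A. gk_rate k V0 + ereal c)"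
    unfolding GKdim_eq_SUP using SUP_ereal_add_left[OF False, of "ereal c"] by simp
  also have "\<dots> \<le> GKdim k B"
  proof (rule SUP_least)
    fix V0 assume "V0 \<in> gk_frames k A"
    then obtain V where "V \<in> gk_frames k B" "gk_rate k V0 + ereal c \<le> gk_rate k V" using assms by blast
    then show "gk_rate k V0 + ereal c \<le> GKdim k B"
      unfolding GKdim_eq_SUP by (blast intro: order_trans SUP_upper)
  qed
  finally show ?thesis .
qed

context galois_algebra
begin

lemma frame_growth:
  assumes u: "\<And>j. j < n \<Longrightarrow> u j \<in> U \<and> is_lead (u j) (t j)"
    and ind: "\<forall>c::nat \<Rightarrow> int. (\<forall>i. (\<Sum>j<n. c j * t j i) = 0) \<longrightarrow> (\<forall>j<n. c j = 0)"
    and V0: "V0 \<in> gk_frames k (iota ` \<Gamma>)"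
  shows "\<exists>V\<in>gk_frames k U. gk_rate k V0 + ereal (real n) \<le> gk_rate k V"
proof -
  obtain S0 where S0: "finite S0" "S0 \<subseteq> iota ` \<Gamma>" "V0 = kspan k S0" and one0: "skew_one \<in> V0"
    using V0 unfolding gk_frames_def by blast
  define S where "S = S0 \<union> u ` {..<n}"
  have S: "finite S" "S \<subseteq> U" "S0 \<subseteq> S" using S0 U_Gamma u by (auto simp: S_def)
  have S_carrier: "S \<subseteq> skew_carrier M" using S(2) U_carrier by blast
  have S0_scalar: "\<And>x. x \<in> S0 \<Longrightarrow> is_scalar x" using S0(2) is_scalar_iota by auto
  have "kspan k S \<in> gk_frames k U"
    using S one0 lspan_mono[OF S(3)] by (auto simp: gk_frames_def S0(3) kspan_eq_lspan)
  moreover have "gk_rate k V0 + ereal (real n) \<le> gk_rate k (kspan k S)"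
    unfolding gk_rate_def S0(3)
  proof (rule limsup_growth)
    show "1 \<le> kdim k (kspan k (vprods (kspan k S0) m))" for m
      using kdim_vprods_pos[OF S0(1)] S(3) S_carrier one0 S0(3) by blast
    show "(m + 1) ^ n * kdim k (kspan k (vprods (kspan k S0) m))
        \<le> kdim k (kspan k (vprods (kspan k S) ((n + 1) * m)))" for m
      using dim_growth[OF S0(1) S0_scalar _ S(1) S_carrier S(3) _ ind] one0 S0(3) u
      by (auto simp: S_def)
  qed
  ultimately show ?thesis by blast
qed

end

theorem proposition5p5:
  fixes k \<Gamma> :: "'L::field_char_0 set"
    and M G :: "('L \<Rightarrow> 'L) set"
    and U :: "'L skew set"
    and n :: nat
  assumes k_field: "alg_closed_subfield k"
    and Gamma: "fg_k_domain k \<Gamma>"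
    and Galois: "finite_galois_over (frac_field \<Gamma>)"
    and G_def: "G = Aut_over (frac_field \<Gamma>)"
    and M_sub: "M \<subseteq> Aut_over k"
    and M_monoid: "id \<in> M" "\<forall>m\<in>M. \<forall>m'\<in>M. m \<circ> m' \<in> M"
    and M_sep: "\<forall>m\<in>M. \<forall>m'\<in>M. (\<forall>x\<in>frac_field \<Gamma>. m x = m' x) \<longrightarrow> m = m'"
    and G_conj: "\<forall>g\<in>G. \<forall>m\<in>M. g \<circ> m \<circ> inv g \<in> M"
    and M_Zn: "monoid_iso_Zn M n"
    and U_Gamma: "iota ` \<Gamma> \<subseteq> U"
    and U_fg: "\<exists>S. finite S \<and> S \<subseteq> U \<and> U = skew_ring_gen (iota ` \<Gamma> \<union> S)"
    and U_sub: "U \<subseteq> skew_invariants M G"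
    and KU: "left_span (frac_field \<Gamma>) U = skew_invariants M G"
    and UK: "right_span (frac_field \<Gamma>) U = skew_invariants M G"
  shows "GKdim k U \<ge> GKdim k (iota ` \<Gamma>) + ereal (real n)"
proof -
  obtain \<phi> where \<phi>: "bij_betw \<phi> (Zn n) M" "\<forall>a\<in>Zn n. \<forall>b\<in>Zn n. \<phi> (\<lambda>i. a i + b i) = \<phi> a \<circ> \<phi> b"
    using M_Zn unfolding monoid_iso_Zn_def by blast
  interpret galois_algebra k M n \<phi> \<Gamma> G U
  proof unfold_locales
    show "is_subfield k" using k_field by (simp add: alg_closed_subfield_def)
    show "is_subring \<Gamma>" using Gamma ring_gen_subring unfolding fg_k_domain_def by metis
    show "finite G" unfolding G_def by (rule finite_Aut_over[OF Galois])
    show "skew_subring U" using U_fg skew_ring_gen_subring by metis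
  qed (use M_sub M_monoid \<phi> G_def G_conj U_Gamma U_sub KU in auto)
  obtain u t where u: "\<forall>j<n. u j \<in> U \<and> is_lead (u j) (t j)"
    and ind: "\<forall>c::nat \<Rightarrow> int. (\<forall>i. (\<Sum>j<n. c j * t j i) = 0) \<longrightarrow> (\<forall>j<n. c j = 0)"
    using exists_indep_leads by blast
  show ?thesis
    using GKdim_add_le[of k "iota ` \<Gamma>" U "real n"] frame_growth[OF _ ind] u by blast
qed

end
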